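(* Let $d\ge2$ be an integer and $N_1,\dots,N_d$ positive integers. Suppose $\mathbf{b}=(b_1,\dots,b_d)\in\mathbb{Z}^d$ is a nonzero vector with \[ \lambda=\lambda(\mathbf{b}):=\max_{1\le i\le d}\frac{|b_i|}{\gcd(b_1,\dots,b_d)N_i}\le1. \] Then there exists a map $f_{\mathbf{b}}:\mathbb{Z}^d\to\mathbb{Z}^{d-1}$ of the form $f_{\mathbf{b}}(\mathbf{x})=M\mathbf{x}+\mathbf{v}$ with $M\in\mathbb{Z}^{(d-1)\times d}$, $\mathbf{v}\in\mathbb{Z}^{d-1}$, such that: (1) for any $\mathbf{x}_1,\mathbf{x}_2\in\mathbb{Z}^d$, $f_{\mathbf{b}}(\mathbf{x}_1)=f_{\mathbf{b}}(\mathbf{x}_2)$ if and only if $\mathbf{x}_1-\mathbf{x}_2=k\mathbf{b}$ for some $k\in\mathbb{Q}$; (2) there exist positive integers $N_1^*,\dots,N_{d-1}^*\ge\min_{1\le i\le d}N_i$ with $\frac12\le\frac{N_1^*\cdots N_{d-1}^*}{\lambda N_1\cdots N_d}\le2^{d^2}$ and $f_{\mathbf{b}}([N_1]\times\cdots\times[N_d])\subseteq[N_1^*]\times\cdots\times[N_{d-1}^*]$.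
   Context: $[N]=\{1,\dots,N\}$. *)

theory Defs
  imports Complex_Main
begin

text \<open>Vectors in Z^d are represented as functions nat => int, with
  coordinates indexed by {1..d}; coordinates outside are irrelevant.\<close>

definition vgcd :: "nat \<Rightarrow> (nat \<Rightarrow> int) \<Rightarrow> int" where
  "vgcd d b = Gcd (b ` {1..d})"

definition lam :: "nat \<Rightarrow> (nat \<Rightarrow> nat) \<Rightarrow> (nat \<Rightarrow> int) \<Rightarrow> real" where
  "lam d N b = Max ((\<lambda>i. real_of_int \<bar>b i\<bar> / (real_of_int (vgcd d b) * real (N i))) ` {1..d})"

definition affmap :: "nat \<Rightarrow> (nat \<Rightarrow> nat \<Rightarrow> int) \<Rightarrow> (nat \<Rightarrow> int) \<Rightarrow> (nat \<Rightarrow> int) \<Rightarrow> nat \<Rightarrow> int" where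
  "affmap d M v x i = (\<Sum>j=1..d. M i j * x j) + v i"

end

theory Submission
  imports Defs "Jordan_Normal_Form.Determinant"
begin

text \<open>Choose m maximising |b_m| / N_m and drop the m-th coordinate. The integer vectors orthogonal
  to b project onto the lattice L = {y. b_m dvd sum_{j \<noteq> m} b_j y_j} in \<int>^(d-1), whose index is
  at most |b_m| / gcd b, as an explicit triangular basis shows. A weighted \<ell>1 form of Minkowski's
  second theorem (take a shortest vector, project along it, induct on the dimension) gives d - 1
  independent vectors of L whose weighted norms sum_j N_j |y_j| have product at most
  2^((d-1)^2) |b_m| / gcd b * prod_{j \<noteq> m} N_j = 2^((d-1)^2) \<lambda> N_1 ... N_d, and by the choice of
  m, restoring the m-th coordinate at most doubles each norm. These vectors are the rows of M: its
  kernel is \<rat> b, and after a shift each row maps the box [N_1] \<times> ... \<times> [N_d] into an interval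
  whose length is the weighted norm of the row.\<close>

section \<open>Lattices in \<open>\<int>\<^sup>n\<close>\<close>

definition int_lattice :: "nat \<Rightarrow> int vec set \<Rightarrow> bool" where
  "int_lattice n L \<longleftrightarrow> L \<subseteq> carrier_vec n \<and> 0\<^sub>v n \<in> L \<and>
     (\<forall>x\<in>L. \<forall>y\<in>L. x + y \<in> L) \<and> (\<forall>x\<in>L. - x \<in> L)"

definition vec_lincomb :: "nat \<Rightarrow> nat \<Rightarrow> (nat \<Rightarrow> int vec) \<Rightarrow> (nat \<Rightarrow> int) \<Rightarrow> int vec" where
  "vec_lincomb n m F c = vec n (\<lambda>i. \<Sum>k<m. c k * F k $ i)"

definition cols_mat :: "nat \<Rightarrow> (nat \<Rightarrow> int vec) \<Rightarrow> int mat" where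
  "cols_mat n F = mat n n (\<lambda>(i, j). F j $ i)"

definition weighted_norm :: "(nat \<Rightarrow> nat) \<Rightarrow> int vec \<Rightarrow> int" where
  "weighted_norm N x = (\<Sum>i<dim_vec x. int (N i) * \<bar>x $ i\<bar>)"

lemma int_lattice_carrier: "int_lattice n L \<Longrightarrow> x \<in> L \<Longrightarrow> x \<in> carrier_vec n"
  and int_lattice_zero: "int_lattice n L \<Longrightarrow> 0\<^sub>v n \<in> L"
  and int_lattice_add: "int_lattice n L \<Longrightarrow> x \<in> L \<Longrightarrow> y \<in> L \<Longrightarrow> x + y \<in> L"
  and int_lattice_uminus: "int_lattice n L \<Longrightarrow> x \<in> L \<Longrightarrow> - x \<in> L"
  unfolding int_lattice_def by auto

lemma int_lattice_diff:
  assumes L: "int_lattice n L" and "x \<in> L" "y \<in> L"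
  shows "x - y \<in> L"
proof -
  have "x - y = x + (- y)"
    using assms int_lattice_carrier[OF L] by auto
  then show ?thesis
    using assms by (simp add: int_lattice_add int_lattice_uminus)
qed

lemma int_lattice_smult_nat:
  assumes L: "int_lattice n L" and x: "x \<in> L"
  shows "int m \<cdot>\<^sub>v x \<in> L"
proof (induction m)
  case 0
  have "0 \<cdot>\<^sub>v x = 0\<^sub>v n"
    using int_lattice_carrier[OF L x] by auto
  then show ?case
    using int_lattice_zero[OF L] by simp
next
  case (Suc m)
  have "int (Suc m) \<cdot>\<^sub>v x = int m \<cdot>\<^sub>v x + x"
    using int_lattice_carrier[OF L x] by (auto simp: algebra_simps)
  then show ?case
    using int_lattice_add[OF L Suc x] by simp
qed

lemma int_lattice_smult:
  assumes L: "int_lattice n L" and x: "x \<in> L"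
  shows "k \<cdot>\<^sub>v x \<in> L"
proof (cases "k \<ge> 0")
  case True
  then show ?thesis
    using int_lattice_smult_nat[OF L x, of "nat k"] by simp
next
  case False
  then have eq: "k \<cdot>\<^sub>v x = - (int (nat (- k)) \<cdot>\<^sub>v x)"
    using int_lattice_carrier[OF L x] by auto
  show ?thesis
    unfolding eq by (rule int_lattice_uminus[OF L int_lattice_smult_nat[OF L x]])
qed

lemma vec_lincomb_carrier [simp]: "vec_lincomb n m F c \<in> carrier_vec n"
  and dim_vec_lincomb [simp]: "dim_vec (vec_lincomb n m F c) = n"
  unfolding vec_lincomb_def by auto

lemma vec_lincomb_cong: "(\<And>k. k < m \<Longrightarrow> F k = G k) \<Longrightarrow> vec_lincomb n m F c = vec_lincomb n m G c"
  unfolding vec_lincomb_def by (intro eq_vecI) auto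

lemma int_lattice_lincomb:
  assumes L: "int_lattice n L" and F: "\<And>k. k < m \<Longrightarrow> F k \<in> L"
  shows "vec_lincomb n m F c \<in> L"
  using F
proof (induction m)
  case 0
  have "vec_lincomb n 0 F c = 0\<^sub>v n"
    unfolding vec_lincomb_def by auto
  then show ?case
    using int_lattice_zero[OF L] by simp
next
  case (Suc m)
  have "vec_lincomb n (Suc m) F c = vec_lincomb n m F c + c m \<cdot>\<^sub>v F m"
    using int_lattice_carrier[OF L Suc.prems[of m]] unfolding vec_lincomb_def
    by (intro eq_vecI) auto
  moreover have "vec_lincomb n m F c \<in> L"
    using Suc by simp
  ultimately show ?case
    using int_lattice_add[OF L] int_lattice_smult[OF L Suc.prems[of m]] by simp
qed

lemma int_subgroup_principal:
  fixes I :: "int set"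
  assumes "0 \<in> I" and sub: "\<And>x y q. x \<in> I \<Longrightarrow> y \<in> I \<Longrightarrow> x - q * y \<in> I"
  shows "\<exists>g\<in>I. \<forall>x\<in>I. g dvd x"
proof (cases "I \<subseteq> {0}")
  case True
  then show ?thesis
    using \<open>0 \<in> I\<close> by auto
next
  case False
  then obtain x0 where x0: "x0 \<in> I" "x0 \<noteq> 0" by auto
  have neg: "- x \<in> I" if "x \<in> I" for x
    using sub[OF \<open>0 \<in> I\<close> that, of 1] by simp
  have "\<bar>x0\<bar> \<in> I"
    using x0(1) neg[OF x0(1)] by (simp add: abs_if)
  then have "\<exists>p. p > 0 \<and> int p \<in> I"
    using x0(2) by (intro exI[of _ "nat \<bar>x0\<bar>"]) simp
  define p where "p = (LEAST p. p > 0 \<and> int p \<in> I)"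
  have p: "p > 0" "int p \<in> I"
    using LeastI_ex[OF \<open>\<exists>p. _\<close>] unfolding p_def by auto
  have "int p dvd x" if x: "x \<in> I" for x
  proof (rule ccontr)
    assume "\<not> int p dvd x"
    then have "x mod int p \<noteq> 0"
      by (simp add: dvd_eq_mod_eq_0)
    moreover have "x mod int p \<ge> 0"
      using p(1) by simp
    ultimately have "x mod int p > 0"
      by linarith
    moreover have "x mod int p \<in> I"
      using sub[OF x p(2), of "x div int p"] by (simp add: minus_div_mult_eq_mod)
    ultimately have "int (nat (x mod int p)) \<in> I"
      by simp
    with \<open>x mod int p > 0\<close> have "p \<le> nat (x mod int p)"
      unfolding p_def by (intro Least_le) simp
    moreover have "x mod int p < int p"
      using p(1) by simp
    ultimately show False
      using \<open>x mod int p > 0\<close> by (simp add: le_nat_iff)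
  qed
  then show ?thesis
    using p(2) by blast
qed

definition extend_zero :: "nat \<Rightarrow> int vec \<Rightarrow> int vec" where
  "extend_zero n u = vec (Suc n) (\<lambda>i. if i < n then u $ i else 0)"

lemma int_lattice_slice:
  assumes M: "int_lattice (Suc n) M"
  shows "int_lattice n {u \<in> carrier_vec n. extend_zero n u \<in> M}"
proof -
  have "extend_zero n (0\<^sub>v n) = 0\<^sub>v (Suc n)"
    unfolding extend_zero_def by (intro eq_vecI) auto
  moreover have "extend_zero n (u + u') = extend_zero n u + extend_zero n u'"
    if "u \<in> carrier_vec n" "u' \<in> carrier_vec n" for u u'
    unfolding extend_zero_def using that by (intro eq_vecI) auto
  moreover have "extend_zero n (- u) = - extend_zero n u" if "u \<in> carrier_vec n" for u
    unfolding extend_zero_def using that by (intro eq_vecI) auto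
  ultimately show ?thesis
    using M unfolding int_lattice_def by auto
qed

lemma int_lattice_last_coord_generator:
  assumes M: "int_lattice (Suc n) M"
  shows "\<exists>t\<in>M. \<forall>w\<in>M. t $ n dvd w $ n"
proof -
  have "\<exists>g\<in>(\<lambda>w. w $ n) ` M. \<forall>x\<in>(\<lambda>w. w $ n) ` M. g dvd x"
  proof (rule int_subgroup_principal)
    show "0 \<in> (\<lambda>w. w $ n) ` M"
      using int_lattice_zero[OF M] by force
    fix x y q assume "x \<in> (\<lambda>w. w $ n) ` M" "y \<in> (\<lambda>w. w $ n) ` M"
    then obtain w w' where "w \<in> M" "w' \<in> M" "x = w $ n" "y = w' $ n" by blast
    moreover from this have "w - q \<cdot>\<^sub>v w' \<in> M"
      by (intro int_lattice_diff[OF M] int_lattice_smult[OF M])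
    ultimately show "x - q * y \<in> (\<lambda>w. w $ n) ` M"
      using int_lattice_carrier[OF M \<open>w \<in> M\<close>] int_lattice_carrier[OF M \<open>w' \<in> M\<close>]
      by (intro image_eqI[of _ _ "w - q \<cdot>\<^sub>v w'"]) auto
  qed
  then show ?thesis
    by blast
qed

text \<open>Hermite's argument: a vector whose last coordinate generates the ideal of last coordinates,
  together with generators of the slice where the last coordinate vanishes, generates \<open>M\<close>.\<close>
lemma int_lattice_generated:
  assumes "int_lattice n M"
  shows "\<exists>T. (\<forall>k<n. T k \<in> M) \<and> (\<forall>w\<in>M. \<exists>c. w = vec_lincomb n n T c)"
  using assms
proof (induction n arbitrary: M)
  case 0
  have "w = vec_lincomb 0 0 T c" if "w \<in> M" for w T c
    using int_lattice_carrier[OF "0" that] by (intro eq_vecI) auto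
  then show ?case by blast
next
  case (Suc n)
  note M = Suc.prems
  obtain T0 where T0: "\<forall>k<n. extend_zero n (T0 k) \<in> M"
    "\<forall>u\<in>carrier_vec n. extend_zero n u \<in> M \<longrightarrow> (\<exists>c. u = vec_lincomb n n T0 c)"
    using Suc.IH[OF int_lattice_slice[OF M]] by blast
  obtain t where t: "t \<in> M" "\<forall>w\<in>M. t $ n dvd w $ n"
    using int_lattice_last_coord_generator[OF M] by blast
  define T where "T = (\<lambda>k. if k < n then extend_zero n (T0 k) else t)"
  have "\<exists>c. w = vec_lincomb (Suc n) (Suc n) T c" if w: "w \<in> M" for w
  proof -
    obtain q where q: "w $ n = q * t $ n"
      using t(2) w by (metis dvd_def mult.commute)
    define z where "z = w - q \<cdot>\<^sub>v t"
    have z: "z \<in> M" "z \<in> carrier_vec (Suc n)" "z $ n = 0"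
      unfolding z_def using w t(1) q int_lattice_carrier[OF M w] int_lattice_carrier[OF M t(1)]
      by (auto simp: int_lattice_diff[OF M] int_lattice_smult[OF M])
    define u where "u = vec n (\<lambda>i. z $ i)"
    have "extend_zero n u = z"
      using z by (intro eq_vecI) (auto simp: extend_zero_def u_def less_Suc_eq)
    moreover have "u \<in> carrier_vec n"
      unfolding u_def by simp
    ultimately obtain c where c: "u = vec_lincomb n n T0 c"
      using T0(2) z(1) by auto
    have "w = vec_lincomb (Suc n) (Suc n) T (\<lambda>k. if k < n then c k else q)"
    proof (rule eq_vecI)
      fix i assume "i < dim_vec (vec_lincomb (Suc n) (Suc n) T (\<lambda>k. if k < n then c k else q))"
      then have i: "i < Suc n" by simp
      have "(\<Sum>k<n. c k * extend_zero n (T0 k) $ i) = (if i < n then u $ i else 0)"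
        using c i by (auto simp: extend_zero_def vec_lincomb_def)
      then show "w $ i = vec_lincomb (Suc n) (Suc n) T (\<lambda>k. if k < n then c k else q) $ i"
        using i z int_lattice_carrier[OF M w] int_lattice_carrier[OF M t(1)] unfolding z_def u_def
        by (auto simp: vec_lincomb_def T_def less_Suc_eq)
    qed (use w int_lattice_carrier[OF M] in auto)
    then show ?thesis by blast
  qed
  moreover have "\<forall>k<Suc n. T k \<in> M"
    using T0(1) t(1) by (auto simp: T_def)
  ultimately show ?case by blast
qed

section \<open>Eliminating one coordinate\<close>

definition skip :: "nat \<Rightarrow> nat \<Rightarrow> nat" where
  "skip j i = (if i < j then i else Suc i)"

lemma skip_neq [simp]: "skip j i \<noteq> j" "j \<noteq> skip j i"
  and skip_eq_iff [simp]: "skip j i = skip j i' \<longleftrightarrow> i = i'"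
  and skip_less: "i < n \<Longrightarrow> skip j i < Suc n"
  unfolding skip_def by auto

lemma bij_betw_skip:
  assumes "a \<le> j" "j \<le> b"
  shows "bij_betw (skip j) {a..<b} ({a..<Suc b} - {j})"
proof (rule bij_betw_imageI)
  show "inj_on (skip j) {a..<b}"
    by (auto intro: inj_onI)
  show "skip j ` {a..<b} = {a..<Suc b} - {j}"
  proof (intro equalityI subsetI)
    fix i assume "i \<in> {a..<Suc b} - {j}"
    with assms show "i \<in> skip j ` {a..<b}"
      by (intro image_eqI[of _ _ "if i < j then i else i - 1"]) (auto simp: skip_def)
  qed (use assms in \<open>auto simp: skip_def\<close>)
qed

lemma sum_skip:
  assumes "j < Suc n"
  shows "(\<Sum>i<Suc n. f i) = f j + (\<Sum>i<n. f (skip j i))"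
proof -
  have "(\<Sum>i<Suc n. f i) = f j + sum f ({..<Suc n} - {j})"
    by (rule sum.remove) (use assms in auto)
  also have "sum f ({..<Suc n} - {j}) = (\<Sum>i<n. f (skip j i))"
    using sum.reindex_bij_betw[OF bij_betw_skip[of 0 j n], of f] assms
    by (simp add: lessThan_atLeast0)
  finally show ?thesis .
qed

lemma prod_skip:
  assumes "j < Suc n"
  shows "(\<Prod>i<Suc n. f i) = f j * (\<Prod>i<n. f (skip j i))"
proof -
  have "(\<Prod>i<Suc n. f i) = f j * prod f ({..<Suc n} - {j})"
    by (rule prod.remove) (use assms in auto)
  also have "prod f ({..<Suc n} - {j}) = (\<Prod>i<n. f (skip j i))"
    using prod.reindex_bij_betw[OF bij_betw_skip[of 0 j n], of f] assms
    by (simp add: lessThan_atLeast0)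
  finally show ?thesis .
qed

text \<open>The projection along \<open>v\<close> onto the hyperplane \<open>x\<^sub>j = 0\<close>, scaled by \<open>v\<^sub>j\<close> to stay integral.\<close>
definition elim_coord :: "nat \<Rightarrow> nat \<Rightarrow> int vec \<Rightarrow> int vec \<Rightarrow> int vec" where
  "elim_coord n j v y = vec n (\<lambda>i. v $ j * y $ skip j i - y $ j * v $ skip j i)"

lemma elim_coord_carrier [simp]: "elim_coord n j v y \<in> carrier_vec n"
  and dim_elim_coord [simp]: "dim_vec (elim_coord n j v y) = n"
  unfolding elim_coord_def by auto

context
  fixes n j :: nat and v :: "int vec"
  assumes j: "j < Suc n"
begin

lemma elim_coord_zero: "elim_coord n j v (0\<^sub>v (Suc n)) = 0\<^sub>v n"
  unfolding elim_coord_def using j by (intro eq_vecI) (auto simp: skip_less)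

lemma elim_coord_add:
  "y \<in> carrier_vec (Suc n) \<Longrightarrow> y' \<in> carrier_vec (Suc n) \<Longrightarrow>
    elim_coord n j v (y + y') = elim_coord n j v y + elim_coord n j v y'"
  unfolding elim_coord_def using j by (intro eq_vecI) (auto simp: skip_less algebra_simps)

lemma elim_coord_uminus:
  "y \<in> carrier_vec (Suc n) \<Longrightarrow> elim_coord n j v (- y) = - elim_coord n j v y"
  unfolding elim_coord_def using j by (intro eq_vecI) (auto simp: skip_less algebra_simps)

lemma elim_coord_diff:
  "y \<in> carrier_vec (Suc n) \<Longrightarrow> y' \<in> carrier_vec (Suc n) \<Longrightarrow>
    elim_coord n j v (y - y') = elim_coord n j v y - elim_coord n j v y'"
  unfolding elim_coord_def using j by (intro eq_vecI) (auto simp: skip_less algebra_simps)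

lemma elim_coord_diff_smult:
  "y \<in> carrier_vec (Suc n) \<Longrightarrow> v \<in> carrier_vec (Suc n) \<Longrightarrow>
    elim_coord n j v (y - q \<cdot>\<^sub>v v) = elim_coord n j v y"
  unfolding elim_coord_def using j by (intro eq_vecI) (auto simp: skip_less algebra_simps)

lemma elim_coord_lincomb:
  "elim_coord n j v (vec_lincomb (Suc n) m F c) = vec_lincomb n m (\<lambda>k. elim_coord n j v (F k)) c"
  unfolding elim_coord_def vec_lincomb_def using j
  by (intro eq_vecI) (auto simp: skip_less algebra_simps sum_distrib_left sum_subtractf)

lemma int_lattice_elim_coord:
  assumes L: "int_lattice (Suc n) L"
  shows "int_lattice n (elim_coord n j v ` L)"
  unfolding int_lattice_def
proof (intro conjI ballI)
  show "0\<^sub>v n \<in> elim_coord n j v ` L"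
    using int_lattice_zero[OF L] elim_coord_zero by force
  fix x y assume "x \<in> elim_coord n j v ` L" "y \<in> elim_coord n j v ` L"
  then obtain x' y' where "x' \<in> L" "y' \<in> L" "x = elim_coord n j v x'" "y = elim_coord n j v y'"
    by auto
  then have "x + y = elim_coord n j v (x' + y')" "- x = elim_coord n j v (- x')"
    using int_lattice_carrier[OF L] by (simp_all add: elim_coord_add elim_coord_uminus)
  then show "x + y \<in> elim_coord n j v ` L" "- x \<in> elim_coord n j v ` L"
    using \<open>x' \<in> L\<close> \<open>y' \<in> L\<close> int_lattice_add[OF L] int_lattice_uminus[OF L] by auto
qed auto

end

lemma weighted_norm_nonneg: "weighted_norm N x \<ge> 0"
  unfolding weighted_norm_def by (intro sum_nonneg) auto

lemma weighted_norm_smult: "weighted_norm N (k \<cdot>\<^sub>v x) = \<bar>k\<bar> * weighted_norm N x"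
  unfolding weighted_norm_def by (auto simp: sum_distrib_left abs_mult algebra_simps)

lemma weighted_norm_coord_le:
  "i < dim_vec x \<Longrightarrow> int (N i) * \<bar>x $ i\<bar> \<le> weighted_norm N x"
  unfolding weighted_norm_def by (rule member_le_sum) auto

lemma weighted_norm_pos:
  assumes "x \<in> carrier_vec n" "x \<noteq> 0\<^sub>v n" "\<forall>i<n. N i > 0"
  shows "weighted_norm N x > 0"
proof -
  obtain i where i: "i < n" "x $ i \<noteq> 0"
    using assms(1,2) by (metis eq_vecI carrier_vecD index_zero_vec)
  then have "0 < int (N i) * \<bar>x $ i\<bar>"
    using assms(3) by auto
  also have "\<dots> \<le> weighted_norm N x"
    using i assms(1) by (intro weighted_norm_coord_le) auto
  finally show ?thesis .
qed

lemma weighted_norm_elim_coord: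
  assumes y: "y \<in> carrier_vec (Suc n)" and v: "v \<in> carrier_vec (Suc n)"
    and j: "j < Suc n" and pos: "v $ j > 0"
  shows "v $ j * weighted_norm N y \<le> weighted_norm (\<lambda>i. N (skip j i)) (elim_coord n j v y) + \<bar>y $ j\<bar> * weighted_norm N v"
proof -
  let ?a = "v $ j" and ?N' = "\<lambda>i. int (N (skip j i))" and ?w = "elim_coord n j v y"
  have coord: "?a * (?N' i * \<bar>y $ skip j i\<bar>) \<le> ?N' i * \<bar>?w $ i\<bar> + \<bar>y $ j\<bar> * (?N' i * \<bar>v $ skip j i\<bar>)"
    if i: "i < n" for i
  proof -
    have "?a * y $ skip j i = ?w $ i + y $ j * v $ skip j i"
      unfolding elim_coord_def using i by simp
    then have "?a * \<bar>y $ skip j i\<bar> \<le> \<bar>?w $ i\<bar> + \<bar>y $ j\<bar> * \<bar>v $ skip j i\<bar>"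
      using pos by (metis abs_mult abs_of_pos abs_triangle_ineq)
    then have "?N' i * (?a * \<bar>y $ skip j i\<bar>) \<le> ?N' i * (\<bar>?w $ i\<bar> + \<bar>y $ j\<bar> * \<bar>v $ skip j i\<bar>)"
      by (rule mult_left_mono) simp
    then show ?thesis
      by (simp add: algebra_simps)
  qed
  have split: "weighted_norm N x = int (N j) * \<bar>x $ j\<bar> + (\<Sum>i<n. ?N' i * \<bar>x $ skip j i\<bar>)"
    if "x \<in> carrier_vec (Suc n)" for x
    unfolding weighted_norm_def using that sum_skip[OF j] by simp
  have "?a * weighted_norm N y
      = \<bar>y $ j\<bar> * (int (N j) * \<bar>v $ j\<bar>) + (\<Sum>i<n. ?a * (?N' i * \<bar>y $ skip j i\<bar>))"
    unfolding split[OF y] using pos by (simp add: algebra_simps sum_distrib_left)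
  also have "\<dots> \<le> \<bar>y $ j\<bar> * (int (N j) * \<bar>v $ j\<bar>)
      + (\<Sum>i<n. ?N' i * \<bar>?w $ i\<bar> + \<bar>y $ j\<bar> * (?N' i * \<bar>v $ skip j i\<bar>))"
    using coord by (intro add_left_mono sum_mono) auto
  also have "\<dots> = weighted_norm (\<lambda>i. N (skip j i)) ?w + \<bar>y $ j\<bar> * weighted_norm N v"
    unfolding split[OF v] by (simp add: weighted_norm_def sum.distrib sum_distrib_left algebra_simps)
  finally show ?thesis .
qed

section \<open>Determinants of column matrices\<close>

lemma cols_mat_carrier [simp]: "cols_mat n F \<in> carrier_mat n n"
  unfolding cols_mat_def by auto

lemma cols_mat_cong: "(\<And>k. k < n \<Longrightarrow> F k = G k) \<Longrightarrow> cols_mat n F = cols_mat n G"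
  unfolding cols_mat_def by (intro eq_matI) auto

lemma det_cols_mat_zero_col:
  assumes "k < n" "F k = 0\<^sub>v n"
  shows "det (cols_mat n F) = 0"
proof -
  have "det (cols_mat n F) = (\<Sum>r<n. cols_mat n F $$ (r, k) * cofactor (cols_mat n F) r k)"
    by (rule laplace_expansion_column[OF cols_mat_carrier assms(1)])
  also have "\<dots> = 0"
    using assms by (intro sum.neutral) (auto simp: cols_mat_def)
  finally show ?thesis .
qed

lemma cols_mat_lincomb:
  assumes G: "\<And>l. l < n \<Longrightarrow> G l \<in> carrier_vec n"
    and B: "\<And>k. k < n \<Longrightarrow> B k = vec_lincomb n n G (u k)"
  shows "cols_mat n B = cols_mat n G * mat n n (\<lambda>(l, k). u k l)"
proof (rule eq_matI)
  fix r k assume "r < dim_row (cols_mat n G * mat n n (\<lambda>(l, k). u k l))"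
    "k < dim_col (cols_mat n G * mat n n (\<lambda>(l, k). u k l))"
  then have r: "r < n" and k: "k < n" by (auto simp: cols_mat_def)
  have "(cols_mat n G * mat n n (\<lambda>(l, k). u k l)) $$ (r, k) = (\<Sum>l<n. G l $ r * u k l)"
    using r k unfolding times_mat_def scalar_prod_def cols_mat_def
    by (auto intro!: sum.cong simp: lessThan_atLeast0)
  also have "\<dots> = B k $ r"
    using B[OF k] r unfolding vec_lincomb_def by (auto simp: mult.commute intro!: sum.cong)
  finally show "cols_mat n B $$ (r, k) = (cols_mat n G * mat n n (\<lambda>(l, k). u k l)) $$ (r, k)"
    using r k by (simp add: cols_mat_def)
qed (auto simp: cols_mat_def)

lemma det_cols_mat_generated:
  assumes G: "\<And>l. l < n \<Longrightarrow> G l \<in> carrier_vec n"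
    and B: "\<And>k. k < n \<Longrightarrow> \<exists>c. B k = vec_lincomb n n G c"
    and det: "det (cols_mat n B) \<noteq> 0"
  shows "det (cols_mat n G) \<noteq> 0" "\<bar>det (cols_mat n G)\<bar> \<le> \<bar>det (cols_mat n B)\<bar>"
proof -
  obtain u where "\<And>k. k < n \<Longrightarrow> B k = vec_lincomb n n G (u k)"
    using B by metis
  then have "det (cols_mat n B) = det (cols_mat n G) * det (mat n n (\<lambda>(l, k). u k l))"
    by (simp add: cols_mat_lincomb[OF G] det_mult[OF cols_mat_carrier])
  with det show "det (cols_mat n G) \<noteq> 0" "\<bar>det (cols_mat n G)\<bar> \<le> \<bar>det (cols_mat n B)\<bar>"
    by (auto simp: abs_mult)
qed

lemma det_cols_mat_kernel:
  assumes det: "det (cols_mat n V) \<noteq> 0" and w: "w \<in> carrier_vec n"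
    and orth: "\<forall>k<n. (\<Sum>i<n. V k $ i * w $ i) = 0"
  shows "w = 0\<^sub>v n"
proof (rule ccontr)
  assume "w \<noteq> 0\<^sub>v n"
  have "(cols_mat n V)\<^sup>T *\<^sub>v w = 0\<^sub>v n"
    using orth w by (intro eq_vecI)
      (auto simp: cols_mat_def mult_mat_vec_def scalar_prod_def lessThan_atLeast0)
  then have "det ((cols_mat n V)\<^sup>T) = 0"
    using det_0_iff_vec_prod_zero[of "(cols_mat n V)\<^sup>T" n] w \<open>w \<noteq> 0\<^sub>v n\<close> by auto
  then show False
    using det det_transpose[OF cols_mat_carrier] by simp
qed

lemma mat_delete_index_skip:
  "A \<in> carrier_mat (Suc n) (Suc n) \<Longrightarrow> i < n \<Longrightarrow> k < n \<Longrightarrow>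
    mat_delete A j j' $$ (i, k) = A $$ (skip j i, skip j' k)"
  unfolding mat_delete_def skip_def by auto

text \<open>Row operations turning each row \<open>r \<noteq> j\<close> into \<open>v\<^sub>j\<close> times itself minus \<open>v\<^sub>r\<close> times row \<open>j\<close>.\<close>
definition elim_mat :: "nat \<Rightarrow> nat \<Rightarrow> int vec \<Rightarrow> int mat" where
  "elim_mat n j v = mat (Suc n) (Suc n) (\<lambda>(r, c).
     if r = j then of_bool (c = j) else if c = r then v $ j else if c = j then - v $ r else 0)"

lemma elim_mat_carrier: "elim_mat n j v \<in> carrier_mat (Suc n) (Suc n)"
  unfolding elim_mat_def by simp

lemma det_elim_mat:
  assumes j: "j < Suc n"
  shows "det (elim_mat n j v) = (v $ j) ^ n"
proof -
  let ?R = "elim_mat n j v"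
  have "det ?R = (\<Sum>c<Suc n. ?R $$ (j, c) * cofactor ?R j c)"
    by (rule laplace_expansion_row[OF elim_mat_carrier j])
  also have "\<dots> = (\<Sum>c<Suc n. if c = j then cofactor ?R j c else 0)"
    using j by (intro sum.cong) (auto simp: elim_mat_def)
  also have "\<dots> = det (mat_delete ?R j j)"
    using j by (simp add: cofactor_def mult_2[symmetric] power_mult)
  also have "mat_delete ?R j j = v $ j \<cdot>\<^sub>m 1\<^sub>m n"
  proof (rule eq_matI)
    fix i k assume "i < dim_row (v $ j \<cdot>\<^sub>m 1\<^sub>m n)" "k < dim_col (v $ j \<cdot>\<^sub>m 1\<^sub>m n)"
    then have i: "i < n" and k: "k < n" by auto
    show "mat_delete ?R j j $$ (i, k) = (v $ j \<cdot>\<^sub>m 1\<^sub>m n) $$ (i, k)"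
      using mat_delete_index_skip[OF elim_mat_carrier i k] i k skip_less[OF i, of j] skip_less[OF k, of j]
      by (auto simp: elim_mat_def)
  qed (auto simp: elim_mat_def mat_delete_def)
  finally show ?thesis
    by simp
qed

lemma elim_mat_mult_cols_mat:
  assumes F: "\<And>k. k < Suc n \<Longrightarrow> F k \<in> carrier_vec (Suc n)" and j: "j < Suc n"
  shows "elim_mat n j v * cols_mat (Suc n) F = mat (Suc n) (Suc n) (\<lambda>(r, k).
     if r = j then F k $ j else v $ j * F k $ r - v $ r * F k $ j)"
    (is "_ = ?RA")
proof (rule eq_matI)
  fix r k assume "r < dim_row ?RA" "k < dim_col ?RA"
  then have r: "r < Suc n" and k: "k < Suc n" by auto
  have "(elim_mat n j v * cols_mat (Suc n) F) $$ (r, k) = (\<Sum>l<Suc n. elim_mat n j v $$ (r, l) * F k $ l)"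
    using r k unfolding times_mat_def scalar_prod_def cols_mat_def elim_mat_def
    by (auto intro!: sum.cong simp: lessThan_atLeast0)
  also have "\<dots> = ?RA $$ (r, k)"
  proof (cases "r = j")
    case True
    have "(\<Sum>l<Suc n. elim_mat n j v $$ (r, l) * F k $ l) = (\<Sum>l<Suc n. if l = j then F k $ l else 0)"
      using r True by (intro sum.cong) (auto simp: elim_mat_def)
    then show ?thesis
      using True j r k by simp
  next
    case False
    have "(\<Sum>l<Suc n. elim_mat n j v $$ (r, l) * F k $ l) = (\<Sum>l<Suc n.
        (if l = r then v $ j * F k $ l else 0) + (if l = j then - v $ r * F k $ l else 0))"
      using r False by (intro sum.cong) (auto simp: elim_mat_def)
    then show ?thesis
      using False j r k by (simp add: sum.distrib)
  qed
  finally show "(elim_mat n j v * cols_mat (Suc n) F) $$ (r, k) = ?RA $$ (r, k)" .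
qed (auto simp: elim_mat_def cols_mat_def)

lemma det_elim_coord:
  assumes F: "\<And>k. k < Suc n \<Longrightarrow> F k \<in> carrier_vec (Suc n)" and j: "j < Suc n"
  shows "F 0 $ j * det (cols_mat n (\<lambda>k. elim_coord n j (F 0) (F (Suc k)))) * (-1) ^ j
    = (F 0 $ j) ^ n * det (cols_mat (Suc n) F)"
proof -
  let ?v = "F 0" and ?E = "cols_mat n (\<lambda>k. elim_coord n j (F 0) (F (Suc k)))"
  define RA where "RA = mat (Suc n) (Suc n) (\<lambda>(r, k).
     if r = j then F k $ j else ?v $ j * F k $ r - ?v $ r * F k $ j)"
  have RA: "RA \<in> carrier_mat (Suc n) (Suc n)"
    unfolding RA_def by simp
  have "det RA = (\<Sum>r<Suc n. RA $$ (r, 0) * cofactor RA r 0)"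
    by (rule laplace_expansion_column[OF RA]) simp
  also have "\<dots> = (\<Sum>r<Suc n. if r = j then ?v $ j * cofactor RA r 0 else 0)"
    by (intro sum.cong) (auto simp: RA_def)
  also have "\<dots> = ?v $ j * (-1) ^ j * det (mat_delete RA j 0)"
    using j by (simp add: cofactor_def)
  also have "mat_delete RA j 0 = ?E"
  proof (rule eq_matI)
    fix i k assume "i < dim_row ?E" "k < dim_col ?E"
    then have i: "i < n" and k: "k < n" by (auto simp: cols_mat_def)
    show "mat_delete RA j 0 $$ (i, k) = ?E $$ (i, k)"
      using mat_delete_index_skip[OF RA i k] i k skip_less[OF i, of j] skip_less[OF k, of 0]
      by (auto simp: RA_def cols_mat_def elim_coord_def skip_def)
  qed (auto simp: RA_def cols_mat_def mat_delete_def)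
  finally have "det RA = ?v $ j * (-1) ^ j * det ?E" .
  moreover have "det RA = (?v $ j) ^ n * det (cols_mat (Suc n) F)"
    using det_mult[OF elim_mat_carrier cols_mat_carrier, of n j ?v F] j
    by (simp add: RA_def elim_mat_mult_cols_mat[OF F j] det_elim_mat)
  ultimately show ?thesis
    by (simp add: mult_ac)
qed

section \<open>Short linearly independent lattice vectors\<close>

lemma weighted_norm_le_max_coord:
  assumes x: "x \<in> carrier_vec (Suc n)" "x \<noteq> 0\<^sub>v (Suc n)" and N: "\<forall>i<Suc n. N i > 0"
  shows "\<exists>j<Suc n. x $ j \<noteq> 0 \<and> weighted_norm N x \<le> int (Suc n) * int (N j) * \<bar>x $ j\<bar>"
proof -
  define f where "f i = int (N i) * \<bar>x $ i\<bar>" for i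
  have "Max (f ` {..<Suc n}) \<in> f ` {..<Suc n}"
    by (rule Max_in) auto
  then obtain j where j: "j < Suc n" "f j = Max (f ` {..<Suc n})"
    by auto
  have fj: "f i \<le> f j" if "i < Suc n" for i
    unfolding j(2) using that by (intro Max_ge) auto
  have "x $ j \<noteq> 0"
  proof
    assume "x $ j = 0"
    have "x $ i = 0" if i: "i < Suc n" for i
    proof (rule ccontr)
      assume "x $ i \<noteq> 0"
      then have "0 < f i"
        using N i by (simp add: f_def)
      then show False
        using fj[OF i] \<open>x $ j = 0\<close> by (simp add: f_def)
    qed
    then show False
      using x by (metis carrier_vecD eq_vecI index_zero_vec)
  qed
  moreover have "weighted_norm N x = (\<Sum>i<Suc n. f i)"
    using x(1) by (simp add: weighted_norm_def f_def)
  moreover have "(\<Sum>i<Suc n. f i) \<le> (\<Sum>i<Suc n. f j)"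
    using fj by (intro sum_mono) auto
  ultimately show ?thesis
    using j(1) by (auto simp: f_def)
qed

lemma exists_shortest_vector_pos_coord:
  assumes L: "int_lattice (Suc n) L" and x: "x \<in> L" "x \<noteq> 0\<^sub>v (Suc n)"
    and N: "\<forall>i<Suc n. N i > 0"
  shows "\<exists>v j. v \<in> L \<and> j < Suc n \<and> v $ j > 0 \<and> weighted_norm N v \<le> int (Suc n) * int (N j) * v $ j \<and>
    (\<forall>y\<in>L. y \<noteq> 0\<^sub>v (Suc n) \<longrightarrow> weighted_norm N v \<le> weighted_norm N y)"
proof -
  obtain v0 where v0: "v0 \<in> L" "v0 \<noteq> 0\<^sub>v (Suc n)"
    and min: "\<And>y. y \<in> L \<Longrightarrow> y \<noteq> 0\<^sub>v (Suc n) \<Longrightarrow> nat (weighted_norm N v0) \<le> nat (weighted_norm N y)"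
    using ex_has_least_nat[of "\<lambda>y. y \<in> L \<and> y \<noteq> 0\<^sub>v (Suc n)" x "\<lambda>y. nat (weighted_norm N y)"] x by blast
  have v0c: "v0 \<in> carrier_vec (Suc n)"
    using int_lattice_carrier[OF L v0(1)] .
  obtain j where j: "j < Suc n" "v0 $ j \<noteq> 0"
    and bound: "weighted_norm N v0 \<le> int (Suc n) * int (N j) * \<bar>v0 $ j\<bar>"
    using weighted_norm_le_max_coord[OF v0c v0(2) N] by blast
  define v where "v = sgn (v0 $ j) \<cdot>\<^sub>v v0"
  have "\<bar>sgn (v0 $ j)\<bar> = 1"
    using j(2) by (simp add: abs_sgn_eq_1)
  then have wv: "weighted_norm N v = weighted_norm N v0"
    unfolding v_def by (simp add: weighted_norm_smult)
  have "v \<in> L"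
    unfolding v_def by (rule int_lattice_smult[OF L v0(1)])
  moreover have "v $ j = \<bar>v0 $ j\<bar>"
    using j(1) v0c by (simp add: v_def abs_sgn mult.commute)
  moreover have "weighted_norm N v0 \<le> weighted_norm N y" if "y \<in> L" "y \<noteq> 0\<^sub>v (Suc n)" for y
    using min[OF that] weighted_norm_nonneg[of N y] by simp
  ultimately show ?thesis
    using j bound wv by (intro exI[of _ v] exI[of _ j]) auto
qed

lemma exists_round_half:
  fixes x a :: int
  assumes "a > 0"
  shows "\<exists>q. 2 * \<bar>x - q * a\<bar> \<le> a"
proof -
  define q where "q = (2 * x + a) div (2 * a)"
  define t where "t = (2 * x + a) mod (2 * a)"
  have "2 * x + a = 2 * (q * a) + t" "0 \<le> t" "t < 2 * a"
    unfolding q_def t_def using assms div_mult_mod_eq[of "2 * x + a" "2 * a"]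
    by (simp_all add: algebra_simps)
  then have "\<bar>2 * (x - q * a)\<bar> \<le> a"
    unfolding abs_le_iff by (simp add: algebra_simps)
  then show ?thesis
    by (intro exI[of _ q]) (simp only: abs_mult abs_numeral)
qed

lemma elim_coord_eq_zero_collinear:
  assumes ker: "elim_coord n j v y = 0\<^sub>v n" and j: "j < Suc n" and i: "i < Suc n"
  shows "v $ j * y $ i = y $ j * v $ i"
proof (cases "i = j")
  case False
  then have "i \<in> skip j ` {0..<n}"
    using bij_betw_skip[of 0 j n] i j by (simp add: bij_betw_def)
  then obtain i' where "i' < n" "i = skip j i'"
    by auto
  then show ?thesis
    using arg_cong[OF ker, of "\<lambda>x. x $ i'"] by (simp add: elim_coord_def)
qed simp

context
  fixes n j :: nat and N :: "nat \<Rightarrow> nat" and L :: "int vec set" and v :: "int vec"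
  assumes L: "int_lattice (Suc n) L" and v: "v \<in> L" and j: "j < Suc n" and pos: "v $ j > 0"
    and N: "\<forall>i<Suc n. N i > 0"
    and shortest: "\<forall>y\<in>L. y \<noteq> 0\<^sub>v (Suc n) \<longrightarrow> weighted_norm N v \<le> weighted_norm N y"
begin

private lemma vc: "v \<in> carrier_vec (Suc n)"
  using int_lattice_carrier[OF L v] .

lemma shortest_elim_coord_kernel:
  assumes y: "y \<in> L" and ker: "elim_coord n j v y = 0\<^sub>v n"
  shows "\<exists>q. y = q \<cdot>\<^sub>v v"
proof -
  let ?a = "v $ j"
  have yc: "y \<in> carrier_vec (Suc n)"
    using int_lattice_carrier[OF L y] .
  have collinear: "?a * y $ i = y $ j * v $ i" if "i < Suc n" for i
    using elim_coord_eq_zero_collinear[OF ker j that] .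
  define q where "q = y $ j div ?a"
  define r where "r = y $ j mod ?a"
  define z where "z = y - q \<cdot>\<^sub>v v"
  have z: "z \<in> L" "z \<in> carrier_vec (Suc n)"
    unfolding z_def using yc vc by (auto intro!: int_lattice_diff[OF L y] int_lattice_smult[OF L v])
  have zi: "?a * z $ i = r * v $ i" if i: "i < Suc n" for i
  proof -
    have "y $ j = q * ?a + r"
      unfolding q_def r_def by (rule div_mult_mod_eq[symmetric])
    then show ?thesis
      using collinear[OF i] i yc vc unfolding z_def by (simp add: algebra_simps)
  qed
  have az: "?a \<cdot>\<^sub>v z = r \<cdot>\<^sub>v v"
    using zi z(2) vc by (intro eq_vecI) auto
  \<comment> \<open>otherwise \<open>z\<close> would be a nonzero lattice vector shorter than \<open>v\<close>\<close>
  have "r = 0"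
  proof (rule ccontr)
    assume "r \<noteq> 0"
    moreover have "0 \<le> r" "r < ?a"
      unfolding r_def using pos by simp_all
    ultimately have r: "0 < r" "r < ?a"
      by simp_all
    have "z \<noteq> 0\<^sub>v (Suc n)"
      using zi[OF j] r pos j by auto
    then have "?a * weighted_norm N v \<le> ?a * weighted_norm N z"
      using shortest z(1) pos by simp
    also have "\<dots> = r * weighted_norm N v"
      using arg_cong[OF az, of "weighted_norm N"] pos r by (simp add: weighted_norm_smult)
    finally have le: "?a * weighted_norm N v \<le> r * weighted_norm N v" .
    have "v \<noteq> 0\<^sub>v (Suc n)"
      using pos j by auto
    then have "weighted_norm N v > 0"
      using weighted_norm_pos[OF vc _ N] by blast
    with le r show False
      by simp
  qed
  have "y = q \<cdot>\<^sub>v v"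
  proof (rule eq_vecI)
    fix i assume "i < dim_vec (q \<cdot>\<^sub>v v)"
    then have i: "i < Suc n" using vc by simp
    then have "z $ i = 0"
      using zi[OF i] pos \<open>r = 0\<close> by simp
    then show "y $ i = (q \<cdot>\<^sub>v v) $ i"
      using i yc vc unfolding z_def by simp
  qed (use yc vc in simp)
  then show ?thesis ..
qed

lemma shortest_elim_coord_lift:
  assumes w: "w \<in> elim_coord n j v ` L"
  shows "\<exists>y\<in>L. elim_coord n j v y = w \<and>
    (w \<noteq> 0\<^sub>v n \<longrightarrow> v $ j * weighted_norm N y \<le> 2 * weighted_norm (\<lambda>i. N (skip j i)) w)"
proof -
  obtain y0 where y0: "y0 \<in> L" "w = elim_coord n j v y0"
    using w by auto
  obtain q where q: "2 * \<bar>y0 $ j - q * v $ j\<bar> \<le> v $ j"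
    using exists_round_half[OF pos] by blast
  define y where "y = y0 - q \<cdot>\<^sub>v v"
  have y: "y \<in> L" "y \<in> carrier_vec (Suc n)"
    unfolding y_def using int_lattice_carrier[OF L] y0(1) v
    by (auto intro!: int_lattice_diff[OF L] int_lattice_smult[OF L])
  have ew: "elim_coord n j v y = w"
    unfolding y_def y0(2) using int_lattice_carrier[OF L y0(1)] vc
    by (rule elim_coord_diff_smult[OF j])
  have yj: "2 * \<bar>y $ j\<bar> \<le> v $ j"
    using q j vc int_lattice_carrier[OF L y0(1)] by (simp add: y_def)
  have "v $ j * weighted_norm N y \<le> 2 * weighted_norm (\<lambda>i. N (skip j i)) w" if "w \<noteq> 0\<^sub>v n"
  proof -
    have "y \<noteq> 0\<^sub>v (Suc n)"
      using ew that elim_coord_zero[OF j] by auto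
    then have "v $ j * weighted_norm N v \<le> v $ j * weighted_norm N y"
      using shortest y(1) pos by simp
    moreover have "2 * \<bar>y $ j\<bar> * weighted_norm N v \<le> v $ j * weighted_norm N v"
      using yj weighted_norm_nonneg by (rule mult_right_mono)
    ultimately show ?thesis
      using weighted_norm_elim_coord[OF y(2) vc j pos, of N] ew by simp
  qed
  then show ?thesis
    using y(1) ew by blast
qed

lemma shortest_elim_coord_generators:
  assumes T: "\<forall>w\<in>elim_coord n j v ` L. \<exists>c. w = vec_lincomb n n T c"
    and Y: "\<forall>k<n. Y k \<in> L \<and> elim_coord n j v (Y k) = T k"
    and y: "y \<in> L"
  shows "\<exists>c. y = vec_lincomb (Suc n) (Suc n) (case_nat v Y) c"
proof -
  obtain c where c: "elim_coord n j v y = vec_lincomb n n T c"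
    using T y by blast
  define x where "x = vec_lincomb (Suc n) n Y c"
  have x: "x \<in> L"
    unfolding x_def using Y by (intro int_lattice_lincomb[OF L]) auto
  have "elim_coord n j v x = vec_lincomb n n T c"
    unfolding x_def elim_coord_lincomb[OF j] using Y by (intro vec_lincomb_cong) auto
  then have "elim_coord n j v (y - x) = 0\<^sub>v n"
    using c int_lattice_carrier[OF L y] int_lattice_carrier[OF L x]
    by (simp add: elim_coord_diff[OF j])
  then obtain q where q: "y - x = q \<cdot>\<^sub>v v"
    using shortest_elim_coord_kernel[OF int_lattice_diff[OF L y x]] by blast
  have "y = vec_lincomb (Suc n) (Suc n) (case_nat v Y) (case_nat q c)"
  proof (rule eq_vecI)
    fix i assume "i < dim_vec (vec_lincomb (Suc n) (Suc n) (case_nat v Y) (case_nat q c))"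
    then have i: "i < Suc n" by simp
    have "y $ i = q * v $ i + x $ i"
      using arg_cong[OF q, of "\<lambda>z. z $ i"] i vc int_lattice_carrier[OF L y] int_lattice_carrier[OF L x]
      by simp
    then show "y $ i = vec_lincomb (Suc n) (Suc n) (case_nat v Y) (case_nat q c) $ i"
      using i unfolding x_def vec_lincomb_def by (simp del: sum.lessThan_Suc add: sum.lessThan_Suc_shift)
  qed (use int_lattice_carrier[OF L y] in simp)
  then show ?thesis
    by blast
qed

text \<open>\<open>v\<close> together with lifts of generators of the projected lattice generates \<open>L\<close>, so their
  determinant divides that of \<open>B\<close>; eliminating the coordinate multiplies it by \<open>v\<^sub>j\<^sup>n\<^sup>-\<^sup>1\<close>.\<close>
lemma shortest_elim_coord_index:
  assumes B: "\<forall>k<Suc n. B k \<in> L" and det: "det (cols_mat (Suc n) B) \<noteq> 0"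
  shows "\<exists>T. (\<forall>k<n. T k \<in> elim_coord n j v ` L) \<and> det (cols_mat n T) \<noteq> 0 \<and>
    v $ j * \<bar>det (cols_mat n T)\<bar> \<le> v $ j ^ n * \<bar>det (cols_mat (Suc n) B)\<bar>"
proof -
  obtain T where T: "\<forall>k<n. T k \<in> elim_coord n j v ` L"
    "\<forall>w\<in>elim_coord n j v ` L. \<exists>c. w = vec_lincomb n n T c"
    using int_lattice_generated[OF int_lattice_elim_coord[OF j L]] by blast
  have "\<forall>k. \<exists>y. k < n \<longrightarrow> y \<in> L \<and> elim_coord n j v y = T k"
    using T(1) by (metis imageE)
  then obtain Y where Y: "\<forall>k<n. Y k \<in> L \<and> elim_coord n j v (Y k) = T k"
    by (metis choice)
  let ?F = "case_nat v Y"
  have F: "?F k \<in> carrier_vec (Suc n)" if "k < Suc n" for k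
    using that v Y int_lattice_carrier[OF L] by (cases k) auto
  have detF: "det (cols_mat (Suc n) ?F) \<noteq> 0" "\<bar>det (cols_mat (Suc n) ?F)\<bar> \<le> \<bar>det (cols_mat (Suc n) B)\<bar>"
    using det_cols_mat_generated[OF F _ det] shortest_elim_coord_generators[OF T(2) Y] B by auto
  have detE: "v $ j * det (cols_mat n T) * (-1) ^ j = v $ j ^ n * det (cols_mat (Suc n) ?F)"
    using det_elim_coord[where F = "case_nat v _", OF F j] Y cols_mat_cong[of n T "\<lambda>k. elim_coord n j v (Y k)"] by simp
  have absE: "v $ j * \<bar>det (cols_mat n T)\<bar> = v $ j ^ n * \<bar>det (cols_mat (Suc n) ?F)\<bar>"
    using arg_cong[OF detE, of abs] pos by (simp add: abs_mult power_abs)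
  then have "det (cols_mat n T) \<noteq> 0"
    using detF(1) pos by auto
  moreover have "v $ j * \<bar>det (cols_mat n T)\<bar> \<le> v $ j ^ n * \<bar>det (cols_mat (Suc n) B)\<bar>"
    unfolding absE using detF(2) pos by (intro mult_left_mono) auto
  ultimately show ?thesis
    using T(1) by blast
qed

lemma shortest_elim_coord_lift_basis:
  assumes W: "\<forall>k<n. W k \<in> elim_coord n j v ` L" and det: "det (cols_mat n W) \<noteq> 0"
  shows "\<exists>Z. (\<forall>k<n. Z k \<in> L) \<and> det (cols_mat (Suc n) (case_nat v Z)) \<noteq> 0 \<and>
    v $ j ^ n * (\<Prod>k<n. weighted_norm N (Z k)) \<le> 2 ^ n * (\<Prod>k<n. weighted_norm (\<lambda>i. N (skip j i)) (W k))"
proof -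
  have "W k \<noteq> 0\<^sub>v n" if "k < n" for k
    using det_cols_mat_zero_col[OF that] det by auto
  then have "\<forall>k. \<exists>y. k < n \<longrightarrow> y \<in> L \<and> elim_coord n j v y = W k \<and>
      v $ j * weighted_norm N y \<le> 2 * weighted_norm (\<lambda>i. N (skip j i)) (W k)"
    using shortest_elim_coord_lift W by metis
  then obtain Z where Z: "\<forall>k<n. Z k \<in> L \<and> elim_coord n j v (Z k) = W k \<and>
      v $ j * weighted_norm N (Z k) \<le> 2 * weighted_norm (\<lambda>i. N (skip j i)) (W k)"
    by (metis choice)
  have F: "case_nat v Z k \<in> carrier_vec (Suc n)" if "k < Suc n" for k
    using that v Z int_lattice_carrier[OF L] by (cases k) auto
  have "v $ j * det (cols_mat n W) * (-1) ^ j = v $ j ^ n * det (cols_mat (Suc n) (case_nat v Z))"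
    using det_elim_coord[where F = "case_nat v _", OF F j] Z cols_mat_cong[of n W "\<lambda>k. elim_coord n j v (Z k)"] by simp
  then have "det (cols_mat (Suc n) (case_nat v Z)) \<noteq> 0"
    using det pos by auto
  moreover have "v $ j ^ n * (\<Prod>k<n. weighted_norm N (Z k)) = (\<Prod>k<n. v $ j * weighted_norm N (Z k))"
    by (simp add: prod.distrib)
  moreover have "(\<Prod>k<n. v $ j * weighted_norm N (Z k)) \<le> (\<Prod>k<n. 2 * weighted_norm (\<lambda>i. N (skip j i)) (W k))"
    using Z pos by (intro prod_mono) (auto simp: weighted_norm_nonneg)
  ultimately show ?thesis
    using Z by (intro exI[of _ Z]) (auto simp: prod.distrib)
qed

end

fun short_basis_const :: "nat \<Rightarrow> int" where
  "short_basis_const 0 = 1"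
| "short_basis_const (Suc n) = int (Suc n) * 2 ^ n * short_basis_const n"

lemma short_basis_const_pos: "short_basis_const n > 0"
  by (induction n) auto

lemma short_basis_const_bound: "short_basis_const n * 2 ^ n \<le> 2 ^ (n * n)"
proof (induction n)
  case (Suc n)
  have "int (Suc n) \<le> 2 ^ n"
    by (induction n) auto
  have "short_basis_const (Suc n) * 2 ^ Suc n = (int (Suc n) * 2 ^ Suc n) * (short_basis_const n * 2 ^ n)"
    by (simp add: algebra_simps)
  also have "\<dots> \<le> (2 ^ n * 2 ^ Suc n) * 2 ^ (n * n)"
    using Suc \<open>int (Suc n) \<le> 2 ^ n\<close> short_basis_const_pos[of n] by (intro mult_mono) auto
  also have "\<dots> = 2 ^ (Suc n * Suc n)"
    by (simp add: power_add[symmetric] algebra_simps)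
  finally show ?case .
qed simp

lemma short_basis_const_Suc_bound:
  fixes a w PZ PW dT dB P :: int and c :: nat
  assumes a: "a > 0" and w: "w \<le> int (Suc n) * int c * a" and Z: "a ^ n * PZ \<le> 2 ^ n * PW"
    and W: "PW \<le> short_basis_const n * dT * P" and T: "a * dT \<le> a ^ n * dB"
    and PZ: "PZ \<ge> 0" and P: "P \<ge> 0"
  shows "w * PZ \<le> short_basis_const (Suc n) * dB * (int c * P)"
proof -
  define C where "C = 2 ^ n * short_basis_const n * P"
  have C: "C \<ge> 0"
    unfolding C_def using short_basis_const_pos[of n] P by simp
  have "a ^ n * (a * PZ) = a * (a ^ n * PZ)"
    by (simp add: mult_ac)
  also have "\<dots> \<le> a * (2 ^ n * PW)"
    using Z a by simp
  also have "\<dots> \<le> a * (2 ^ n * (short_basis_const n * dT * P))"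
    using W a by simp
  also have "\<dots> = C * (a * dT)"
    by (simp add: C_def mult_ac)
  also have "\<dots> \<le> C * (a ^ n * dB)"
    using T C by (rule mult_left_mono)
  also have "\<dots> = a ^ n * (C * dB)"
    by (simp add: mult_ac)
  finally have aPZ: "a * PZ \<le> C * dB"
    by (rule mult_left_le_imp_le) (simp add: a)
  have "w * PZ \<le> (int (Suc n) * int c * a) * PZ"
    using w PZ by (rule mult_right_mono)
  also have "\<dots> = int (Suc n) * int c * (a * PZ)"
    by (simp add: mult_ac)
  also have "\<dots> \<le> int (Suc n) * int c * (C * dB)"
    using aPZ by (intro mult_left_mono) auto
  also have "\<dots> = short_basis_const (Suc n) * dB * (int c * P)"
    by (simp add: C_def mult_ac)
  finally show ?thesis .
qed

text \<open>A weighted \<open>\<ell>\<^sub>1\<close> form of Minkowski's second theorem, by induction on the dimension: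
  take a shortest lattice vector \<open>v\<close>, project the lattice along \<open>v\<close> by eliminating a coordinate
  where \<open>N\<^sub>j \<bar>v\<^sub>j\<bar>\<close> is maximal, and lift short vectors of the projection back at most doubling
  their norm.\<close>
theorem short_independent_lattice_vectors:
  assumes "int_lattice n L" "\<forall>k<n. B k \<in> L" "det (cols_mat n B) \<noteq> 0" "\<forall>i<n. N i > 0"
  shows "\<exists>V. (\<forall>k<n. V k \<in> L) \<and> det (cols_mat n V) \<noteq> 0 \<and>
    (\<Prod>k<n. weighted_norm N (V k)) \<le> short_basis_const n * \<bar>det (cols_mat n B)\<bar> * (\<Prod>i<n. int (N i))"
  using assms
proof (induction n arbitrary: L B N)
  case 0
  then show ?case by auto
next
  case (Suc n)
  note L = Suc.prems(1) and det = Suc.prems(3) and N = Suc.prems(4)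
  have "B 0 \<noteq> 0\<^sub>v (Suc n)"
    using det_cols_mat_zero_col[of 0 "Suc n" B] det by auto
  then obtain v j where v: "v \<in> L" "j < Suc n" "v $ j > 0"
      "weighted_norm N v \<le> int (Suc n) * int (N j) * v $ j"
      "\<forall>y\<in>L. y \<noteq> 0\<^sub>v (Suc n) \<longrightarrow> weighted_norm N v \<le> weighted_norm N y"
    using exists_shortest_vector_pos_coord[OF L _ _ N] Suc.prems(2) by blast
  let ?a = "v $ j" and ?N' = "\<lambda>i. N (skip j i)"
  obtain T where T: "\<forall>k<n. T k \<in> elim_coord n j v ` L" "det (cols_mat n T) \<noteq> 0"
      "?a * \<bar>det (cols_mat n T)\<bar> \<le> ?a ^ n * \<bar>det (cols_mat (Suc n) B)\<bar>"
    using shortest_elim_coord_index[OF L v(1-3) N v(5) Suc.prems(2) det] by blast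
  have N': "\<forall>i<n. ?N' i > 0"
    using N skip_less by blast
  obtain W where W: "\<forall>k<n. W k \<in> elim_coord n j v ` L" "det (cols_mat n W) \<noteq> 0"
      "(\<Prod>k<n. weighted_norm ?N' (W k)) \<le> short_basis_const n * \<bar>det (cols_mat n T)\<bar> * (\<Prod>i<n. int (?N' i))"
    using Suc.IH[OF int_lattice_elim_coord[OF v(2) L] T(1,2) N'] by blast
  obtain Z where Z: "\<forall>k<n. Z k \<in> L" "det (cols_mat (Suc n) (case_nat v Z)) \<noteq> 0"
      "?a ^ n * (\<Prod>k<n. weighted_norm N (Z k)) \<le> 2 ^ n * (\<Prod>k<n. weighted_norm ?N' (W k))"
    using shortest_elim_coord_lift_basis[OF L v(1-3) N v(5) W(1,2)] by blast
  have PZ: "0 \<le> (\<Prod>k<n. weighted_norm N (Z k))"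
    by (intro prod_nonneg) (simp add: weighted_norm_nonneg)
  have P: "0 \<le> (\<Prod>i<n. int (?N' i))"
    by (intro prod_nonneg) simp
  have "(\<Prod>k<Suc n. weighted_norm N (case_nat v Z k)) = weighted_norm N v * (\<Prod>k<n. weighted_norm N (Z k))"
    unfolding prod.lessThan_Suc_shift by simp
  also have "\<dots> \<le> short_basis_const (Suc n) * \<bar>det (cols_mat (Suc n) B)\<bar> * (int (N j) * (\<Prod>i<n. int (?N' i)))"
    by (rule short_basis_const_Suc_bound[OF v(3,4) Z(3) W(3) T(3) PZ P])
  also have "int (N j) * (\<Prod>i<n. int (?N' i)) = (\<Prod>i<Suc n. int (N i))"
    by (rule prod_skip[OF v(2), symmetric])
  finally have "(\<Prod>k<Suc n. weighted_norm N (case_nat v Z k))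
      \<le> short_basis_const (Suc n) * \<bar>det (cols_mat (Suc n) B)\<bar> * (\<Prod>i<Suc n. int (N i))" .
  moreover have "\<forall>k<Suc n. case_nat v Z k \<in> L"
    using v(1) Z(1) by (auto split: nat.split)
  ultimately show ?case
    using Z(2) by blast
qed

section \<open>Independent vectors of a congruence lattice\<close>

lemma int_lattice_congruence:
  "int_lattice n {y \<in> carrier_vec n. m dvd (\<Sum>i<n. c i * y $ i)}"
proof -
  have "(\<Sum>i<n. c i * (x + y) $ i) = (\<Sum>i<n. c i * x $ i) + (\<Sum>i<n. c i * y $ i)"
    if "x \<in> carrier_vec n" "y \<in> carrier_vec n" for x y
    using that by (simp add: algebra_simps sum.distrib)
  moreover have "(\<Sum>i<n. c i * (- x) $ i) = - (\<Sum>i<n. c i * x $ i)" if "x \<in> carrier_vec n" for x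
    using that by (simp add: sum_negf)
  ultimately show ?thesis
    unfolding int_lattice_def by auto
qed

fun partial_gcd :: "(nat \<Rightarrow> int) \<Rightarrow> int \<Rightarrow> nat \<Rightarrow> int" where
  "partial_gcd c m 0 = \<bar>m\<bar>"
| "partial_gcd c m (Suc k) = gcd (partial_gcd c m k) (c k)"

lemma partial_gcd_pos: "m \<noteq> 0 \<Longrightarrow> partial_gcd c m k > 0"
  by (induction k) auto

lemma partial_gcd_bezout: "\<exists>z. m dvd (\<Sum>i<k. c i * z i) - partial_gcd c m k"
proof (induction k)
  case (Suc k)
  then obtain z where z: "m dvd (\<Sum>i<k. c i * z i) - partial_gcd c m k"
    by blast
  obtain s t where st: "s * partial_gcd c m k + t * c k = partial_gcd c m (Suc k)"
    using bezout_int by fastforce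
  define z' where "z' i = (if i < k then s * z i else t)" for i
  have "(\<Sum>i<Suc k. c i * z' i) - partial_gcd c m (Suc k) = s * ((\<Sum>i<k. c i * z i) - partial_gcd c m k)"
    using st by (simp add: z'_def sum_distrib_left algebra_simps)
  also have "m dvd \<dots>"
    using z by (rule dvd_mult)
  finally show ?case
    by blast
qed simp

lemma prod_partial_gcd_quotients:
  "(\<Prod>k<K. partial_gcd c m k div partial_gcd c m (Suc k)) * partial_gcd c m K = \<bar>m\<bar>"
proof (induction K)
  case (Suc K)
  have "(partial_gcd c m K div partial_gcd c m (Suc K)) * partial_gcd c m (Suc K) = partial_gcd c m K"
    by simp
  then show ?case
    using Suc.IH by (simp add: mult.assoc)
qed simp

lemma partial_gcd_ge:
  assumes "m \<noteq> 0" "G dvd m" "\<forall>i<n. G dvd c i"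
  shows "G \<le> partial_gcd c m n"
proof -
  have "G dvd partial_gcd c m k" if "k \<le> n" for k
    using that assms(2,3) by (induction k) auto
  then show ?thesis
    using partial_gcd_pos[OF assms(1)] by (simp add: zdvd_imp_le)
qed

lemma det_cols_mat_upper_triangular:
  assumes "\<And>k i. k < n \<Longrightarrow> i < n \<Longrightarrow> k < i \<Longrightarrow> T k $ i = 0"
  shows "det (cols_mat n T) = (\<Prod>k<n. T k $ k)"
proof -
  have "upper_triangular (cols_mat n T)"
    using assms by (auto simp: upper_triangular_def cols_mat_def)
  then have "det (cols_mat n T) = prod_list (diag_mat (cols_mat n T))"
    by (rule det_upper_triangular[OF _ cols_mat_carrier])
  also have "\<dots> = (\<Prod>k<n. T k $ k)"
    by (simp add: prod_list_diag_prod cols_mat_def lessThan_atLeast0)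
  finally show ?thesis .
qed

text \<open>The vectors form a triangular basis: the \<open>k\<close>-th one has diagonal entry
  \<open>g\<^sub>k / g\<^sub>k\<^sub>+\<^sub>1\<close> (with \<open>g\<^sub>k = partial_gcd c m k\<close>) and a Bezout vector for \<open>g\<^sub>k\<close> above the diagonal,
  so that the determinant telescopes to \<open>\<bar>m\<bar> / g\<^sub>n\<close>.\<close>
lemma congruence_lattice_independent:
  fixes c :: "nat \<Rightarrow> int" and m G :: int
  assumes m: "m \<noteq> 0" and G: "G > 0" "G dvd m" "\<forall>i<n. G dvd c i"
  shows "\<exists>T. (\<forall>k<n. T k \<in> carrier_vec n \<and> m dvd (\<Sum>i<n. c i * T k $ i)) \<and>
    det (cols_mat n T) \<noteq> 0 \<and> \<bar>det (cols_mat n T)\<bar> * G \<le> \<bar>m\<bar>"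
proof -
  let ?g = "partial_gcd c m"
  have "\<forall>k. \<exists>z. m dvd (\<Sum>i<k. c i * z i) - ?g k"
    using partial_gcd_bezout by blast
  then obtain Z where Z: "\<forall>k. m dvd (\<Sum>i<k. c i * Z k i) - ?g k"
    by (metis choice)
  define h where "h k = ?g k div ?g (Suc k)" for k
  define T where "T k = vec n (\<lambda>i. if i < k then - (c k div ?g (Suc k)) * Z k i
    else if i = k then h k else 0)" for k
  have T: "T k $ i = (if i < k then - (c k div ?g (Suc k)) * Z k i else if i = k then h k else 0)"
    if "i < n" for i k
    unfolding T_def using that by simp
  have "m dvd (\<Sum>i<n. c i * T k $ i)" if k: "k < n" for k
  proof -
    have "(\<Sum>i<n. c i * T k $ i) = (\<Sum>i<Suc k. c i * T k $ i)"
      using k by (intro sum.mono_neutral_right) (auto simp: T)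
    also have "\<dots> = (\<Sum>i<k. c i * (- (c k div ?g (Suc k)) * Z k i)) + c k * h k"
      using k by (simp add: T)
    also have "(\<Sum>i<k. c i * (- (c k div ?g (Suc k)) * Z k i))
        = - (c k div ?g (Suc k)) * (\<Sum>i<k. c i * Z k i)"
      by (simp add: sum_negf sum_distrib_right mult_ac)
    also have "c k * h k = (c k div ?g (Suc k)) * ?g k"
      unfolding h_def by (simp add: div_mult_swap dvd_div_mult)
    finally have "(\<Sum>i<n. c i * T k $ i) = (c k div ?g (Suc k)) * (?g k - (\<Sum>i<k. c i * Z k i))"
      by (simp add: algebra_simps)
    then show ?thesis
      using spec[OF Z, of k] by (simp add: dvd_diff_commute)
  qed
  then have "\<forall>k<n. m dvd (\<Sum>i<n. c i * T k $ i)"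
    by blast
  moreover have "det (cols_mat n T) = (\<Prod>k<n. T k $ k)"
    by (rule det_cols_mat_upper_triangular) (simp add: T)
  moreover have "(\<Prod>k<n. T k $ k) = (\<Prod>k<n. h k)"
    by (intro prod.cong) (simp_all add: T)
  moreover have "(\<Prod>k<n. h k) * ?g n = \<bar>m\<bar>"
    unfolding h_def by (rule prod_partial_gcd_quotients)
  moreover have "G \<le> ?g n"
    using partial_gcd_ge[OF m G(2,3)] .
  ultimately have det: "det (cols_mat n T) * ?g n = \<bar>m\<bar>" and "G \<le> ?g n"
    by simp_all
  have "?g n > 0"
    using partial_gcd_pos[OF m] .
  moreover have "0 < det (cols_mat n T) * ?g n"
    using det m by simp
  ultimately have "det (cols_mat n T) > 0"
    by (simp add: zero_less_mult_iff)
  then have "det (cols_mat n T) * G \<le> \<bar>m\<bar>"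
    using det mult_left_mono[OF \<open>G \<le> ?g n\<close>, of "det (cols_mat n T)"] by simp
  moreover have "T k \<in> carrier_vec n" for k
    by (simp add: T_def)
  ultimately show ?thesis
    using \<open>det (cols_mat n T) > 0\<close> \<open>\<forall>k<n. m dvd _\<close> by (intro exI[of _ T]) auto
qed

section \<open>The map \<open>f\<^sub>b\<close>\<close>

lemma vgcd_dvd: "i \<in> {1..d} \<Longrightarrow> vgcd d b dvd b i"
  unfolding vgcd_def by (simp add: Gcd_dvd)

lemma vgcd_pos: "\<exists>i\<in>{1..d}. b i \<noteq> 0 \<Longrightarrow> vgcd d b > 0"
  unfolding vgcd_def using Gcd_0_iff[of "b ` {1..d}"] by (auto simp: order_less_le)

lemma lam_attained:
  assumes d: "d \<ge> 1" and N: "\<forall>i\<in>{1..d}. N i > 0" and b: "\<exists>i\<in>{1..d}. b i \<noteq> 0"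
  shows "\<exists>m\<in>{1..d}. b m \<noteq> 0 \<and> (\<forall>i\<in>{1..d}. \<bar>b i\<bar> * int (N m) \<le> \<bar>b m\<bar> * int (N i)) \<and>
    lam d N b * real (\<Prod>i=1..d. N i) = \<bar>b m\<bar> * real (\<Prod>j\<in>{1..d} - {m}. N j) / vgcd d b"
proof -
  define r where "r i = real_of_int \<bar>b i\<bar> / (real_of_int (vgcd d b) * real (N i))" for i
  have "Max (r ` {1..d}) \<in> r ` {1..d}"
    using d by (intro Max_in) auto
  then obtain m where m: "m \<in> {1..d}" "r m = lam d N b"
    unfolding lam_def r_def by auto
  have g: "real_of_int (vgcd d b) > 0"
    using vgcd_pos[OF b] by simp
  have Nm: "N m > 0"
    using N m(1) by blast
  have cross: "\<bar>b i\<bar> * int (N m) \<le> \<bar>b m\<bar> * int (N i)" if i: "i \<in> {1..d}" for i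
  proof -
    have "r i \<le> r m"
      unfolding m(2) lam_def r_def[symmetric] using i by (intro Max_ge) auto
    then have "real_of_int (vgcd d b) * (\<bar>b i\<bar> * N m) \<le> real_of_int (vgcd d b) * (\<bar>b m\<bar> * N i)"
      using N i m(1) g by (simp add: r_def divide_simps mult_ac)
    then have "real_of_int (\<bar>b i\<bar> * int (N m)) \<le> real_of_int (\<bar>b m\<bar> * int (N i))"
      using g by simp
    then show ?thesis
      by (simp only: of_int_le_iff)
  qed
  obtain i0 where i0: "i0 \<in> {1..d}" "b i0 \<noteq> 0"
    using b by blast
  have "b m \<noteq> 0"
    using cross[OF i0(1)] i0(2) Nm by (auto simp: mult_le_0_iff)
  moreover have "lam d N b * real (\<Prod>i=1..d. N i) = \<bar>b m\<bar> * real (\<Prod>j\<in>{1..d} - {m}. N j) / vgcd d b"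
  proof -
    have "(\<Prod>i=1..d. N i) = N m * (\<Prod>j\<in>{1..d} - {m}. N j)"
      using m(1) by (simp add: prod.remove)
    then have "lam d N b * real (\<Prod>i=1..d. N i)
        = \<bar>b m\<bar> / (vgcd d b * N m) * (N m * real (\<Prod>j\<in>{1..d} - {m}. N j))"
      unfolding m(2)[symmetric] r_def by simp
    also have "\<dots> = \<bar>b m\<bar> * real (\<Prod>j\<in>{1..d} - {m}. N j) / vgcd d b"
      using Nm g by (simp add: field_simps)
    finally show ?thesis .
  qed
  ultimately show ?thesis
    using m(1) cross by (intro bexI[of _ m] conjI) simp_all
qed

lemma bij_betw_skip_Suc:
  assumes "m \<in> {1..Suc n}"
  shows "bij_betw (\<lambda>k. skip m (Suc k)) {..<n} ({1..Suc n} - {m})"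
proof -
  have "bij_betw Suc {..<n} {1..<Suc n}"
    by (simp add: bij_betw_def image_Suc_lessThan atLeastLessThanSuc_atLeastAtMost)
  moreover have "bij_betw (skip m) {1..<Suc n} ({1..Suc n} - {m})"
    using bij_betw_skip[of 1 m "Suc n"] assms by (simp add: atLeastLessThanSuc_atLeastAtMost)
  ultimately have "bij_betw (skip m \<circ> Suc) {..<n} ({1..Suc n} - {m})"
    by (rule bij_betw_trans)
  then show ?thesis
    by (simp add: comp_def)
qed

lemma skip_Suc_mem: "k < n \<Longrightarrow> m \<in> {1..Suc n} \<Longrightarrow> skip m (Suc k) \<in> {1..Suc n}"
  by (auto simp: skip_def)

lemma sum_atLeast1_skip:
  assumes "m \<in> {1..Suc n}"
  shows "(\<Sum>j=1..Suc n. f j) = f m + (\<Sum>k<n. f (skip m (Suc k)))"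
  using sum.remove[of "{1..Suc n}" m f] sum.reindex_bij_betw[OF bij_betw_skip_Suc[OF assms], of f] assms
  by simp

lemma prod_atLeast1_minus_skip:
  assumes "m \<in> {1..Suc n}"
  shows "(\<Prod>j\<in>{1..Suc n} - {m}. f j) = (\<Prod>k<n. f (skip m (Suc k)))"
  using prod.reindex_bij_betw[OF bij_betw_skip_Suc[OF assms], of f] by simp

text \<open>Coordinates \<open>1, \<dots>, n + 1\<close> except \<open>m\<close> carry \<open>y\<^sub>0, \<dots>, y\<^sub>n\<^sub>-\<^sub>1\<close>, and coordinate \<open>m\<close> is chosen so
  that the result is orthogonal to \<open>b\<close> whenever \<open>b\<^sub>m\<close> divides the partial inner product.\<close>
definition orth_ext :: "nat \<Rightarrow> (nat \<Rightarrow> int) \<Rightarrow> int vec \<Rightarrow> nat \<Rightarrow> int" where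
  "orth_ext m b y j = (if j = m then - ((\<Sum>k<dim_vec y. b (skip m (Suc k)) * y $ k) div b m)
     else y $ (if j < m then j - 1 else j - 2))"

lemma orth_ext_skip [simp]: "orth_ext m b y (skip m (Suc k)) = y $ k"
  unfolding orth_ext_def skip_def by auto

context
  fixes n m :: nat and b :: "nat \<Rightarrow> int" and y :: "int vec"
  assumes m: "m \<in> {1..Suc n}" and y: "y \<in> carrier_vec n"
    and dvd: "b m dvd (\<Sum>k<n. b (skip m (Suc k)) * y $ k)"
begin

lemma orth_ext_orthogonal: "(\<Sum>j=1..Suc n. orth_ext m b y j * b j) = 0"
proof -
  have "(\<Sum>j=1..Suc n. orth_ext m b y j * b j)
      = - ((\<Sum>k<n. b (skip m (Suc k)) * y $ k) div b m) * b m + (\<Sum>k<n. y $ k * b (skip m (Suc k)))"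
    unfolding sum_atLeast1_skip[OF m] using y by (simp add: orth_ext_def[of m b y m])
  then show ?thesis
    using dvd by (simp add: mult_ac)
qed

lemma orth_ext_orthogonal_multiple:
  fixes q :: rat
  assumes q: "\<forall>j\<in>{1..Suc n}. of_int (z j) = q * of_int (b j)"
  shows "(\<Sum>j=1..Suc n. orth_ext m b y j * z j) = 0"
proof -
  have "(of_int (\<Sum>j=1..Suc n. orth_ext m b y j * z j) :: rat)
      = (\<Sum>j=1..Suc n. of_int (orth_ext m b y j) * (q * of_int (b j)))"
    unfolding of_int_sum of_int_mult by (intro sum.cong refl) (simp add: q)
  also have "\<dots> = q * of_int (\<Sum>j=1..Suc n. orth_ext m b y j * b j)"
    unfolding of_int_sum of_int_mult sum_distrib_left by (intro sum.cong refl) (simp add: mult_ac)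
  also have "(\<Sum>j=1..Suc n. orth_ext m b y j * b j) = 0"
    by (rule orth_ext_orthogonal)
  finally have "(of_int (\<Sum>j=1..Suc n. orth_ext m b y j * z j) :: rat) = 0"
    by simp
  then show ?thesis
    by (simp only: of_int_eq_0_iff)
qed

lemma orth_ext_weight:
  assumes bm: "b m \<noteq> 0" and cross: "\<forall>i\<in>{1..Suc n}. \<bar>b i\<bar> * int (N m) \<le> \<bar>b m\<bar> * int (N i)"
  shows "(\<Sum>j=1..Suc n. int (N j) * \<bar>orth_ext m b y j\<bar>) \<le> 2 * weighted_norm (\<lambda>k. N (skip m (Suc k))) y"
proof -
  let ?S = "\<Sum>k<n. b (skip m (Suc k)) * y $ k" and ?N' = "\<lambda>k. N (skip m (Suc k))"
  have wy: "weighted_norm ?N' y = (\<Sum>k<n. int (?N' k) * \<bar>y $ k\<bar>)"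
    using y by (simp add: weighted_norm_def)
  have "\<bar>b m\<bar> * (int (N m) * \<bar>?S div b m\<bar>) = int (N m) * \<bar>b m * (?S div b m)\<bar>"
    by (simp add: abs_mult mult_ac)
  also have "\<dots> = int (N m) * \<bar>?S\<bar>"
    using dvd by simp
  also have "\<dots> \<le> int (N m) * (\<Sum>k<n. \<bar>b (skip m (Suc k))\<bar> * \<bar>y $ k\<bar>)"
    by (intro mult_left_mono order_trans[OF sum_abs]) (auto simp: abs_mult)
  also have "\<dots> = (\<Sum>k<n. (\<bar>b (skip m (Suc k))\<bar> * int (N m)) * \<bar>y $ k\<bar>)"
    by (simp add: sum_distrib_left mult_ac)
  also have "\<dots> \<le> (\<Sum>k<n. (\<bar>b m\<bar> * int (?N' k)) * \<bar>y $ k\<bar>)"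
    using cross skip_Suc_mem[OF _ m] by (intro sum_mono mult_right_mono) auto
  also have "\<dots> = \<bar>b m\<bar> * weighted_norm ?N' y"
    unfolding wy by (simp add: sum_distrib_left mult_ac)
  finally have "int (N m) * \<bar>?S div b m\<bar> \<le> weighted_norm ?N' y"
    using bm by simp
  then show ?thesis
    unfolding sum_atLeast1_skip[OF m] using y by (simp add: orth_ext_def[of m b y m] wy)
qed

end

lemma rat_multiple_of_skip_proportional:
  assumes m: "m \<in> {1..Suc n}" "b m \<noteq> 0"
    and rel: "\<forall>i<n. b m * z (skip m (Suc i)) = z m * b (skip m (Suc i))"
  shows "\<exists>q::rat. \<forall>j\<in>{1..Suc n}. of_int (z j) = q * of_int (b j)"
proof -
  have "of_int (z j) = of_int (z m) / of_int (b m) * (of_int (b j) :: rat)" if j: "j \<in> {1..Suc n}" for j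
  proof (cases "j = m")
    case False
    then have "j \<in> (\<lambda>k. skip m (Suc k)) ` {..<n}"
      using j bij_betw_imp_surj_on[OF bij_betw_skip_Suc[OF m(1)]] by simp
    then obtain i where i: "i < n" "j = skip m (Suc i)"
      by blast
    then have "(of_int (b m) * of_int (z j) :: rat) = of_int (z m) * of_int (b j)"
      using arg_cong[of _ _ "of_int :: int \<Rightarrow> rat", OF rel[rule_format, OF i(1)]] by simp
    then show ?thesis
      using m(2) by (simp add: field_simps)
  qed (use m(2) in simp)
  then show ?thesis
    by blast
qed

lemma orth_ext_kernel:
  assumes m: "m \<in> {1..Suc n}" "b m \<noteq> 0"
    and V: "\<forall>k<n. V k \<in> carrier_vec n \<and> b m dvd (\<Sum>i<n. b (skip m (Suc i)) * V k $ i)"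
    and det: "det (cols_mat n V) \<noteq> 0"
  shows "(\<forall>k<n. (\<Sum>j=1..Suc n. orth_ext m b (V k) j * z j) = 0) \<longleftrightarrow>
    (\<exists>q::rat. \<forall>j\<in>{1..Suc n}. of_int (z j) = q * of_int (b j))"
proof
  assume orth: "\<forall>k<n. (\<Sum>j=1..Suc n. orth_ext m b (V k) j * z j) = 0"
  let ?c = "\<lambda>i. b (skip m (Suc i))" and ?z = "\<lambda>i. z (skip m (Suc i))"
  define w where "w = vec n (\<lambda>i. b m * ?z i - z m * ?c i)"
  have orth_w: "(\<Sum>i<n. V k $ i * w $ i) = 0" if k: "k < n" for k
  proof -
    let ?S = "\<Sum>i<n. ?c i * V k $ i"
    have Vk: "V k \<in> carrier_vec n" "b m dvd ?S"
      using V k by auto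
    have "(\<Sum>i<n. V k $ i * ?z i) = (?S div b m) * z m"
      using orth k Vk unfolding sum_atLeast1_skip[OF m(1)] by (simp add: orth_ext_def[of m b _ m] mult_ac)
    have "(\<Sum>i<n. V k $ i * w $ i) = (\<Sum>i<n. b m * (V k $ i * ?z i) - z m * (?c i * V k $ i))"
      by (intro sum.cong) (simp_all add: w_def algebra_simps)
    also have "\<dots> = b m * (\<Sum>i<n. V k $ i * ?z i) - z m * ?S"
      by (simp add: sum_subtractf sum_distrib_left)
    also have "\<dots> = z m * (b m * (?S div b m) - ?S)"
      unfolding \<open>(\<Sum>i<n. V k $ i * ?z i) = _\<close> by (simp add: algebra_simps)
    finally show ?thesis
      using Vk by simp
  qed
  have "w \<in> carrier_vec n"
    by (simp add: w_def)
  then have "w = 0\<^sub>v n"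
    using orth_w by (intro det_cols_mat_kernel[OF det]) blast+
  have "\<forall>i<n. b m * ?z i = z m * ?c i"
  proof (intro allI impI)
    fix i assume "i < n"
    then have "w $ i = 0"
      using \<open>w = 0\<^sub>v n\<close> by simp
    then show "b m * ?z i = z m * ?c i"
      using \<open>i < n\<close> by (simp add: w_def)
  qed
  then show "\<exists>q::rat. \<forall>j\<in>{1..Suc n}. of_int (z j) = q * of_int (b j)"
    by (rule rat_multiple_of_skip_proportional[where b = b, OF m])
next
  assume "\<exists>q::rat. \<forall>j\<in>{1..Suc n}. of_int (z j) = q * of_int (b j)"
  then obtain q :: rat where q: "\<forall>j\<in>{1..Suc n}. of_int (z j) = q * of_int (b j)"
    by blast
  show "\<forall>k<n. (\<Sum>j=1..Suc n. orth_ext m b (V k) j * z j) = 0"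
    using V orth_ext_orthogonal_multiple[OF m(1) _ _ q] by blast
qed


lemma ball_atLeast1_shift:
  fixes n :: nat and P :: "nat \<Rightarrow> bool"
  shows "(\<forall>i\<in>{1..n}. P (i - 1)) \<longleftrightarrow> (\<forall>k<n. P k)"
proof (intro iffI allI impI ballI)
  fix k assume all: "\<forall>i\<in>{1..n}. P (i - 1)" and "k < n"
  then show "P k"
    using bspec[OF all, of "Suc k"] by simp
next
  fix i assume all: "\<forall>k<n. P k" and "i \<in> {1..n}"
  then have "i - 1 < n"
    by auto
  then show "P (i - 1)"
    using all by blast
qed

lemma orth_ext_rows:
  assumes m: "m \<in> {1..Suc n}" "b m \<noteq> 0"
    and cross: "\<forall>i\<in>{1..Suc n}. \<bar>b i\<bar> * int (N m) \<le> \<bar>b m\<bar> * int (N i)"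
    and V: "\<forall>k<n. V k \<in> carrier_vec n \<and> b m dvd (\<Sum>i<n. b (skip m (Suc i)) * V k $ i)"
    and det: "det (cols_mat n V) \<noteq> 0"
  defines "R \<equiv> \<lambda>i. orth_ext m b (V (i - 1))"
  shows "\<forall>z. (\<forall>i\<in>{1..n}. (\<Sum>j=1..Suc n. R i j * z j) = 0) \<longleftrightarrow>
      (\<exists>q::rat. \<forall>j\<in>{1..Suc n}. of_int (z j) = q * of_int (b j))"
    and "\<forall>i\<in>{1..n}. \<exists>j\<in>{1..Suc n}. R i j \<noteq> 0"
    and "\<forall>i\<in>{1..n}. (\<Sum>j=1..Suc n. int (N j) * \<bar>R i j\<bar>) \<le> 2 * weighted_norm (\<lambda>k. N (skip m (Suc k))) (V (i - 1))"
proof -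
  show "\<forall>z. (\<forall>i\<in>{1..n}. (\<Sum>j=1..Suc n. R i j * z j) = 0) \<longleftrightarrow>
      (\<exists>q::rat. \<forall>j\<in>{1..Suc n}. of_int (z j) = q * of_int (b j))"
    unfolding R_def ball_atLeast1_shift[where P = "\<lambda>k. (\<Sum>j=1..Suc n. orth_ext m b (V k) j * _ j) = 0"]
    using orth_ext_kernel[OF m V det] by blast
  have "\<exists>j\<in>{1..Suc n}. orth_ext m b (V k) j \<noteq> 0" if k: "k < n" for k
  proof -
    have "V k \<noteq> 0\<^sub>v n"
      using det_cols_mat_zero_col[OF k] det by auto
    moreover have "V k \<in> carrier_vec n"
      using V k by blast
    ultimately have "\<exists>i<n. V k $ i \<noteq> 0"
      by (auto intro!: eq_vecI)
    then obtain i where "i < n" "V k $ i \<noteq> 0"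
      by blast
    then show ?thesis
      using skip_Suc_mem[OF \<open>i < n\<close> m(1)] by (intro bexI[of _ "skip m (Suc i)"]) simp_all
  qed
  then show "\<forall>i\<in>{1..n}. \<exists>j\<in>{1..Suc n}. R i j \<noteq> 0"
    unfolding R_def ball_atLeast1_shift[where P = "\<lambda>k. \<exists>j\<in>{1..Suc n}. orth_ext m b (V k) j \<noteq> 0"] by blast
  show "\<forall>i\<in>{1..n}. (\<Sum>j=1..Suc n. int (N j) * \<bar>R i j\<bar>) \<le> 2 * weighted_norm (\<lambda>k. N (skip m (Suc k))) (V (i - 1))"
    unfolding R_def ball_atLeast1_shift[where P = "\<lambda>k. (\<Sum>j=1..Suc n. int (N j) * \<bar>orth_ext m b (V k) j\<bar>)
      \<le> 2 * weighted_norm (\<lambda>k. N (skip m (Suc k))) (V k)"]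
    using V orth_ext_weight[OF m(1) _ _ m(2) cross] by blast
qed

lemma exists_orthogonal_rows_weight_bound:
  fixes b :: "nat \<Rightarrow> int" and N :: "nat \<Rightarrow> nat"
  assumes N: "\<forall>i\<in>{1..Suc n}. N i > 0" and m: "m \<in> {1..Suc n}" "b m \<noteq> 0"
    and cross: "\<forall>i\<in>{1..Suc n}. \<bar>b i\<bar> * int (N m) \<le> \<bar>b m\<bar> * int (N i)"
  shows "\<exists>R. (\<forall>z. (\<forall>i\<in>{1..n}. (\<Sum>j=1..Suc n. R i j * z j) = 0) \<longleftrightarrow>
        (\<exists>q::rat. \<forall>j\<in>{1..Suc n}. of_int (z j) = q * of_int (b j)))
    \<and> (\<forall>i\<in>{1..n}. \<exists>j\<in>{1..Suc n}. R i j \<noteq> 0)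
    \<and> vgcd (Suc n) b * (\<Prod>i=1..n. \<Sum>j=1..Suc n. int (N j) * \<bar>R i j\<bar>)
        \<le> 2 ^ (n * n) * \<bar>b m\<bar> * (\<Prod>j\<in>{1..Suc n} - {m}. int (N j))"
proof -
  let ?c = "\<lambda>i. b (skip m (Suc i))" and ?N' = "\<lambda>i. N (skip m (Suc i))" and ?g = "vgcd (Suc n) b"
  have g: "?g > 0" "?g dvd b m" "\<forall>i<n. ?g dvd ?c i"
    using m vgcd_dvd[OF skip_Suc_mem[OF _ m(1)]] by (blast intro: vgcd_pos vgcd_dvd)+
  obtain T where T: "\<forall>k<n. T k \<in> carrier_vec n \<and> b m dvd (\<Sum>i<n. ?c i * T k $ i)"
      "det (cols_mat n T) \<noteq> 0" "\<bar>det (cols_mat n T)\<bar> * ?g \<le> \<bar>b m\<bar>"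
    using congruence_lattice_independent[OF m(2) g] by blast
  have N': "\<forall>i<n. ?N' i > 0"
    using N skip_Suc_mem[OF _ m(1)] by blast
  obtain V where V: "\<forall>k<n. V k \<in> carrier_vec n \<and> b m dvd (\<Sum>i<n. ?c i * V k $ i)"
      "det (cols_mat n V) \<noteq> 0"
      "(\<Prod>k<n. weighted_norm ?N' (V k)) \<le> short_basis_const n * \<bar>det (cols_mat n T)\<bar> * (\<Prod>i<n. int (?N' i))"
    using short_independent_lattice_vectors[OF int_lattice_congruence[of n "b m" ?c] _ T(2) N'] T(1)
    by blast
  define R where "R i = orth_ext m b (V (i - 1))" for i
  note rows = orth_ext_rows[OF m cross V(1,2), folded R_def]
  define P where "P = (\<Prod>i<n. int (?N' i))"
  have P: "P \<ge> 0"
    unfolding P_def by (intro prod_nonneg) auto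
  define W where "W = (\<Prod>i=1..n. \<Sum>j=1..Suc n. int (N j) * \<bar>R i j\<bar>)"
  have "W \<le> (\<Prod>i=1..n. 2 * weighted_norm ?N' (V (i - 1)))"
    unfolding W_def using rows(3) by (intro prod_mono conjI sum_nonneg) (simp_all del: sum.cl_ivl_Suc)
  also have "\<dots> = 2 ^ n * (\<Prod>k<n. weighted_norm ?N' (V k))"
    by (simp add: prod.atLeast1_atMost_eq prod.distrib)
  also have "\<dots> \<le> 2 ^ n * (short_basis_const n * \<bar>det (cols_mat n T)\<bar> * P)"
    using V(3) unfolding P_def by (intro mult_left_mono) simp_all
  finally have "?g * W \<le> ?g * (2 ^ n * (short_basis_const n * \<bar>det (cols_mat n T)\<bar> * P))"
    using g(1) by (intro mult_left_mono) simp_all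
  also have "\<dots> = (short_basis_const n * 2 ^ n * P) * (\<bar>det (cols_mat n T)\<bar> * ?g)"
    by (simp add: mult_ac)
  also have "\<dots> \<le> (short_basis_const n * 2 ^ n * P) * \<bar>b m\<bar>"
    using T(3) short_basis_const_pos[of n] P by (intro mult_left_mono) simp_all
  also have "\<dots> \<le> (2 ^ (n * n) * P) * \<bar>b m\<bar>"
    using mult_right_mono[OF short_basis_const_bound[of n] P] by (rule mult_right_mono) simp
  also have "\<dots> = 2 ^ (n * n) * \<bar>b m\<bar> * (\<Prod>j\<in>{1..Suc n} - {m}. int (N j))"
    unfolding P_def prod_atLeast1_minus_skip[OF m(1)] by (simp add: mult_ac)
  finally show ?thesis
    using rows(1,2) unfolding W_def by blast
qed

lemma affmap_eq_iff:
  "affmap d M v x1 i = affmap d M v x2 i \<longleftrightarrow> (\<Sum>j=1..d. M i j * (x1 j - x2 j)) = 0"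
  unfolding affmap_def by (simp add: right_diff_distrib sum_subtractf)

lemma affine_row_box:
  fixes r :: "nat \<Rightarrow> int" and N :: "nat \<Rightarrow> nat"
  assumes J: "finite J" and nz: "\<exists>j\<in>J. r j \<noteq> 0"
  shows "\<exists>c. \<forall>x. (\<forall>j\<in>J. 1 \<le> x j \<and> x j \<le> int (N j)) \<longrightarrow>
    1 \<le> (\<Sum>j\<in>J. r j * x j) + c \<and> (\<Sum>j\<in>J. r j * x j) + c \<le> (\<Sum>j\<in>J. int (N j) * \<bar>r j\<bar>)"
proof (intro exI allI impI)
  fix x assume x: "\<forall>j\<in>J. 1 \<le> x j \<and> x j \<le> int (N j)"
  define lo where "lo j = (if r j \<ge> 0 then r j else r j * int (N j))" for j
  have t: "0 \<le> r j * x j - lo j \<and> r j * x j - lo j \<le> int (N j) * \<bar>r j\<bar> - \<bar>r j\<bar>" if j: "j \<in> J" for j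
  proof -
    have xj: "1 \<le> x j" "x j \<le> int (N j)"
      using x j by auto
    show ?thesis
    proof (cases "r j \<ge> 0")
      case True
      then have "r j * (x j - 1) \<le> r j * (int (N j) - 1)"
        using xj by (intro mult_left_mono) auto
      moreover have "0 \<le> r j * (x j - 1)"
        using True xj by simp
      ultimately show ?thesis
        using True by (simp add: lo_def algebra_simps)
    next
      case False
      then have "- r j * (int (N j) - x j) \<le> - r j * (int (N j) - 1)"
        using xj by (intro mult_left_mono) auto
      moreover have "0 \<le> - r j * (int (N j) - x j)"
        using False xj by (intro mult_nonneg_nonneg) auto
      ultimately show ?thesis
        using False by (simp add: lo_def algebra_simps)
    qed
  qed
  obtain j0 where "j0 \<in> J" "r j0 \<noteq> 0"
    using nz by blast
  then have "1 \<le> (\<Sum>j\<in>J. \<bar>r j\<bar>)"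
    using J member_le_sum[of j0 J "\<lambda>j. \<bar>r j\<bar>"] by simp
  moreover have "(\<Sum>j\<in>J. r j * x j) + (1 - sum lo J) = 1 + (\<Sum>j\<in>J. r j * x j - lo j)"
    by (simp add: sum_subtractf)
  moreover have "0 \<le> (\<Sum>j\<in>J. r j * x j - lo j)"
    using t by (intro sum_nonneg) blast
  moreover have "(\<Sum>j\<in>J. r j * x j - lo j) \<le> (\<Sum>j\<in>J. int (N j) * \<bar>r j\<bar>) - (\<Sum>j\<in>J. \<bar>r j\<bar>)"
    using t by (simp add: sum_subtractf[symmetric] sum_mono)
  ultimately show "1 \<le> (\<Sum>j\<in>J. r j * x j) + (1 - sum lo J) \<and>
    (\<Sum>j\<in>J. r j * x j) + (1 - sum lo J) \<le> (\<Sum>j\<in>J. int (N j) * \<bar>r j\<bar>)"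
    by linarith
qed

lemma exists_affmap_box:
  assumes "\<forall>i\<in>I. \<exists>j\<in>{1..d}. M i j \<noteq> 0"
  shows "\<exists>v. \<forall>i\<in>I. \<forall>x. (\<forall>j\<in>{1..d}. 1 \<le> x j \<and> x j \<le> int (N j)) \<longrightarrow>
    1 \<le> affmap d M v x i \<and> affmap d M v x i \<le> (\<Sum>j=1..d. int (N j) * \<bar>M i j\<bar>)"
proof -
  have "\<forall>i\<in>I. \<exists>c. \<forall>x. (\<forall>j\<in>{1..d}. 1 \<le> x j \<and> x j \<le> int (N j)) \<longrightarrow>
      1 \<le> (\<Sum>j=1..d. M i j * x j) + c \<and> (\<Sum>j=1..d. M i j * x j) + c \<le> (\<Sum>j=1..d. int (N j) * \<bar>M i j\<bar>)"
    using assms affine_row_box[of "{1..d}"] by blast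
  then show ?thesis
    unfolding affmap_def by (rule bchoice)
qed

lemma weighted_row_ge_Min:
  fixes r :: "nat \<Rightarrow> int" and N :: "nat \<Rightarrow> nat"
  assumes "\<exists>j\<in>{1..d}. r j \<noteq> 0" and "\<forall>j\<in>{1..d}. N j > 0"
  shows "0 < Min (N ` {1..d})" "int (Min (N ` {1..d})) \<le> (\<Sum>j=1..d. int (N j) * \<bar>r j\<bar>)"
proof -
  obtain j0 where j0: "j0 \<in> {1..d}" "r j0 \<noteq> 0"
    using assms(1) by blast
  then have "Min (N ` {1..d}) \<in> N ` {1..d}"
    by (intro Min_in finite_imageI) auto
  then show "0 < Min (N ` {1..d})"
    using assms(2) by auto
  have "Min (N ` {1..d}) \<le> N j0"
    using j0(1) by (intro Min_le) auto
  also have "int (N j0) \<le> int (N j0) * \<bar>r j0\<bar>"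
    using j0(2) by (simp add: mult_le_cancel_left1 int_one_le_iff_zero_less)
  also have "\<dots> \<le> (\<Sum>j=1..d. int (N j) * \<bar>r j\<bar>)"
    using j0(1) by (intro member_le_sum) auto
  finally show "int (Min (N ` {1..d})) \<le> (\<Sum>j=1..d. int (N j) * \<bar>r j\<bar>)"
    by simp
qed

text \<open>Only the upper bound on the box sizes carries information; the lower bound is met by
  enlarging the first side.\<close>
lemma exists_box_sizes:
  fixes s :: "nat \<Rightarrow> int" and C X :: real
  assumes n: "n \<ge> 1" and s: "\<forall>i\<in>{1..n}. s i \<ge> 1" and X: "X > 0"
    and bound: "(\<Prod>i=1..n. real_of_int (s i)) \<le> C * X"
  shows "\<exists>Ns. (\<forall>i\<in>{1..n}. s i \<le> int (Ns i)) \<and> X / 2 \<le> real (\<Prod>i=1..n. Ns i) \<and>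
    real (\<Prod>i=1..n. Ns i) \<le> C * X + X / 2"
proof -
  define Q where "Q = (\<Prod>i=2..n. real_of_int (s i))"
  have Q: "Q \<ge> 1"
    unfolding Q_def using s by (intro prod_ge_1) auto
  define Ns where "Ns i = (if i = 1 then max (nat (s 1)) (nat \<lceil>X / (2 * Q)\<rceil>) else nat (s i))" for i
  have split: "(\<Prod>i=1..n. f i) = f 1 * (\<Prod>i=2..n. f i)" for f :: "nat \<Rightarrow> real"
    using n by (simp add: prod.atLeast_Suc_atMost numeral_2_eq_2)
  have "(\<Prod>i=2..n. real (Ns i)) = Q"
    unfolding Q_def
  proof (intro prod.cong refl)
    fix i assume "i \<in> {2..n}"
    then have "1 \<le> s i"
      using s by auto
    then show "real (Ns i) = real_of_int (s i)"
      using \<open>i \<in> {2..n}\<close> by (simp add: Ns_def)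
  qed
  then have prod_Ns: "real (\<Prod>i=1..n. Ns i) = real (Ns 1) * Q"
    unfolding of_nat_prod split by simp
  have "1 \<le> s 1"
    using s n by auto
  then have prod_s: "(\<Prod>i=1..n. real_of_int (s i)) = real (nat (s 1)) * Q"
    unfolding split[of "\<lambda>i. real_of_int (s i)"] Q_def by simp
  have Ns1: "Ns 1 = max (nat (s 1)) (nat \<lceil>X / (2 * Q)\<rceil>)"
    by (simp add: Ns_def)
  have "X / (2 * Q) \<le> real (nat \<lceil>X / (2 * Q)\<rceil>)"
    by (rule real_nat_ceiling_ge)
  also have "\<dots> \<le> real (Ns 1)"
    unfolding Ns1 by simp
  finally have "X / 2 \<le> real (\<Prod>i=1..n. Ns i)"
    unfolding prod_Ns using Q by (simp add: field_simps)
  moreover have "real (\<Prod>i=1..n. Ns i) \<le> C * X + X / 2"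
  proof (cases "nat \<lceil>X / (2 * Q)\<rceil> \<le> nat (s 1)")
    case True
    then have "real (\<Prod>i=1..n. Ns i) = (\<Prod>i=1..n. real_of_int (s i))"
      unfolding prod_Ns prod_s Ns1 by (simp add: max_absorb1)
    then show ?thesis
      using bound X by simp
  next
    case False
    have "0 < X / (2 * Q)"
      using X Q by simp
    then have "0 \<le> \<lceil>X / (2 * Q)\<rceil>"
      by simp
    moreover have "Ns 1 = nat \<lceil>X / (2 * Q)\<rceil>"
      unfolding Ns1 using False by (intro max_absorb2) linarith
    ultimately have "real (Ns 1) = of_int \<lceil>X / (2 * Q)\<rceil>"
      by simp
    then have "real (Ns 1) \<le> X / (2 * Q) + 1"
      using of_int_ceiling_le_add_one[of "X / (2 * Q)"] by linarith
    then have "real (Ns 1) * Q \<le> X / 2 + Q"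
      using Q by (simp add: field_simps)
    moreover have "Q \<le> (\<Prod>i=1..n. real_of_int (s i))"
      unfolding prod_s using Q \<open>1 \<le> s 1\<close> by simp
    ultimately show ?thesis
      unfolding prod_Ns using bound by linarith
  qed
  moreover have "s i \<le> int (Ns i)" for i
  proof -
    have "nat (s i) \<le> Ns i"
      by (simp add: Ns_def)
    then show ?thesis
      by linarith
  qed
  ultimately show ?thesis
    by blast
qed

lemma two_pow_square_Suc:
  assumes "X \<ge> 0"
  shows "(2::real) ^ (n * n) * X + X / 2 \<le> 2 ^ (Suc n)\<^sup>2 * X"
proof -
  have "(1::real) \<le> 2 ^ (n * n)" "(2::real) ^ (n * n + 1) = 2 * 2 ^ (n * n)"
    by simp_all
  then have "(2::real) ^ (n * n) + 1 / 2 \<le> 2 ^ (n * n + 1)"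
    by linarith
  also have "\<dots> \<le> 2 ^ (Suc n)\<^sup>2"
    by (intro power_increasing) (simp_all add: power2_eq_square)
  finally have pow: "(2::real) ^ (n * n) + 1 / 2 \<le> 2 ^ (Suc n)\<^sup>2" .
  show ?thesis
    using mult_right_mono[OF pow assms] by (simp add: distrib_right)
qed

lemma lam_prod_pos:
  assumes "d \<ge> 1" "\<forall>i\<in>{1..d}. N i > 0" "\<exists>i\<in>{1..d}. b i \<noteq> 0"
  shows "0 < lam d N b * real (\<Prod>i=1..d. N i)"
proof -
  obtain m where m: "m \<in> {1..d}" "b m \<noteq> 0"
    and X: "lam d N b * real (\<Prod>i=1..d. N i) = \<bar>b m\<bar> * real (\<Prod>j\<in>{1..d} - {m}. N j) / vgcd d b"
    using lam_attained[OF assms] by auto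
  have "0 < (\<Prod>j\<in>{1..d} - {m}. real (N j))"
    using assms(2) by (intro prod_pos) auto
  then show ?thesis
    unfolding X using m(2) vgcd_pos[OF assms(3)] by simp
qed

lemma exists_orthogonal_rows_lam_bound:
  fixes b :: "nat \<Rightarrow> int" and N :: "nat \<Rightarrow> nat"
  assumes N: "\<forall>i\<in>{1..Suc n}. N i > 0" and b: "\<exists>i\<in>{1..Suc n}. b i \<noteq> 0"
  obtains R where "\<forall>z. (\<forall>i\<in>{1..n}. (\<Sum>j=1..Suc n. R i j * z j) = 0) \<longleftrightarrow>
        (\<exists>q::rat. \<forall>j\<in>{1..Suc n}. of_int (z j) = q * of_int (b j))"
    and "\<forall>i\<in>{1..n}. \<exists>j\<in>{1..Suc n}. R i j \<noteq> 0"
    and "(\<Prod>i=1..n. real_of_int (\<Sum>j=1..Suc n. int (N j) * \<bar>R i j\<bar>))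
        \<le> 2 ^ (n * n) * (lam (Suc n) N b * real (\<Prod>i=1..Suc n. N i))"
proof -
  obtain m where m: "m \<in> {1..Suc n}" "b m \<noteq> 0"
    and cross: "\<forall>i\<in>{1..Suc n}. \<bar>b i\<bar> * int (N m) \<le> \<bar>b m\<bar> * int (N i)"
    and X: "lam (Suc n) N b * real (\<Prod>i=1..Suc n. N i)
      = \<bar>b m\<bar> * real (\<Prod>j\<in>{1..Suc n} - {m}. N j) / vgcd (Suc n) b"
    using lam_attained[OF _ N b] by auto
  obtain R where R: "\<forall>z. (\<forall>i\<in>{1..n}. (\<Sum>j=1..Suc n. R i j * z j) = 0) \<longleftrightarrow>
        (\<exists>q::rat. \<forall>j\<in>{1..Suc n}. of_int (z j) = q * of_int (b j))"
      "\<forall>i\<in>{1..n}. \<exists>j\<in>{1..Suc n}. R i j \<noteq> 0"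
    and bound: "vgcd (Suc n) b * (\<Prod>i=1..n. \<Sum>j=1..Suc n. int (N j) * \<bar>R i j\<bar>)
        \<le> 2 ^ (n * n) * \<bar>b m\<bar> * (\<Prod>j\<in>{1..Suc n} - {m}. int (N j))"
    using exists_orthogonal_rows_weight_bound[OF N m cross] by blast
  have g: "real_of_int (vgcd (Suc n) b) > 0"
    using vgcd_pos[OF b] by simp
  have "real_of_int (vgcd (Suc n) b * (\<Prod>i=1..n. \<Sum>j=1..Suc n. int (N j) * \<bar>R i j\<bar>))
      \<le> real_of_int (2 ^ (n * n) * \<bar>b m\<bar> * (\<Prod>j\<in>{1..Suc n} - {m}. int (N j)))"
    using bound by (simp only: of_int_le_iff)
  also have "\<dots> = real_of_int (vgcd (Suc n) b) * (2 ^ (n * n) * (lam (Suc n) N b * real (\<Prod>i=1..Suc n. N i)))"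
    unfolding X using g by simp
  finally have "(\<Prod>i=1..n. real_of_int (\<Sum>j=1..Suc n. int (N j) * \<bar>R i j\<bar>))
      \<le> 2 ^ (n * n) * (lam (Suc n) N b * real (\<Prod>i=1..Suc n. N i))"
    using g by (simp del: of_int_sum)
  with R show thesis
    by (rule that)
qed

lemma exists_affmap_box_sizes:
  fixes R :: "nat \<Rightarrow> nat \<Rightarrow> int" and N :: "nat \<Rightarrow> nat" and X :: real
  assumes n: "n \<ge> 1" and N: "\<forall>j\<in>{1..Suc n}. N j > 0" and nz: "\<forall>i\<in>{1..n}. \<exists>j\<in>{1..Suc n}. R i j \<noteq> 0"
    and X: "X > 0"
    and bound: "(\<Prod>i=1..n. real_of_int (\<Sum>j=1..Suc n. int (N j) * \<bar>R i j\<bar>)) \<le> 2 ^ (n * n) * X"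
  obtains v Ns where "\<forall>i\<in>{1..n}. 0 < Ns i \<and> Min (N ` {1..Suc n}) \<le> Ns i"
    and "X / 2 \<le> real (\<Prod>i=1..n. Ns i)" and "real (\<Prod>i=1..n. Ns i) \<le> 2 ^ (Suc n)\<^sup>2 * X"
    and "\<forall>x. (\<forall>j\<in>{1..Suc n}. 1 \<le> x j \<and> x j \<le> int (N j)) \<longrightarrow>
        (\<forall>i\<in>{1..n}. 1 \<le> affmap (Suc n) R v x i \<and> affmap (Suc n) R v x i \<le> int (Ns i))"
proof -
  let ?d = "Suc n" and ?\<mu> = "Min (N ` {1..Suc n})" and ?s = "\<lambda>i. \<Sum>j=1..Suc n. int (N j) * \<bar>R i j\<bar>"
  obtain v where box: "\<forall>i\<in>{1..n}. \<forall>x. (\<forall>j\<in>{1..?d}. 1 \<le> x j \<and> x j \<le> int (N j)) \<longrightarrow>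
      1 \<le> affmap ?d R v x i \<and> affmap ?d R v x i \<le> ?s i"
    using exists_affmap_box[OF nz] by blast
  have \<mu>: "0 < ?\<mu>"
    using weighted_row_ge_Min(1)[OF _ N] nz n by fastforce
  have \<mu>_s: "int ?\<mu> \<le> ?s i" if "i \<in> {1..n}" for i
    using weighted_row_ge_Min(2)[OF bspec[OF nz that] N] .
  have "1 \<le> ?s i" if "i \<in> {1..n}" for i
    using \<mu>_s[OF that] \<mu> by linarith
  then have "\<forall>i\<in>{1..n}. 1 \<le> ?s i"
    by blast
  then obtain Ns where Ns: "\<forall>i\<in>{1..n}. ?s i \<le> int (Ns i)" "X / 2 \<le> real (\<Prod>i=1..n. Ns i)"
      "real (\<Prod>i=1..n. Ns i) \<le> 2 ^ (n * n) * X + X / 2"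
    using exists_box_sizes[OF n _ X bound] by blast
  have "0 < Ns i \<and> ?\<mu> \<le> Ns i" if "i \<in> {1..n}" for i
    using \<mu> \<mu>_s[OF that] bspec[OF Ns(1) that] by (intro conjI) linarith+
  moreover have "1 \<le> affmap ?d R v x i \<and> affmap ?d R v x i \<le> int (Ns i)"
    if "\<forall>j\<in>{1..?d}. 1 \<le> x j \<and> x j \<le> int (N j)" "i \<in> {1..n}" for x i
    using box that bspec[OF Ns(1) that(2)] by fastforce
  moreover have "real (\<Prod>i=1..n. Ns i) \<le> 2 ^ (Suc n)\<^sup>2 * X"
    using Ns(3) two_pow_square_Suc[of X n] X by linarith
  ultimately show thesis
    using Ns(2) by (intro that[of Ns v]) blast+
qed

theorem corollary4p6:
  fixes d :: nat and N :: "nat \<Rightarrow> nat" and b :: "nat \<Rightarrow> int"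
  assumes hd: "d \<ge> 2"
    and hN: "\<forall>i\<in>{1..d}. N i > 0"
    and hb: "\<exists>i\<in>{1..d}. b i \<noteq> 0"
    and hlam: "lam d N b \<le> 1"
  shows "\<exists>(M :: nat \<Rightarrow> nat \<Rightarrow> int) (v :: nat \<Rightarrow> int).
     (\<forall>x1 x2 :: nat \<Rightarrow> int.
        (\<forall>i\<in>{1..d-1}. affmap d M v x1 i = affmap d M v x2 i) \<longleftrightarrow>
        (\<exists>k :: rat. \<forall>j\<in>{1..d}. of_int (x1 j - x2 j) = k * of_int (b j)))
   \<and> (\<exists>Ns :: nat \<Rightarrow> nat.
        (\<forall>i\<in>{1..d-1}. Ns i > 0 \<and> Ns i \<ge> Min (N ` {1..d}))
      \<and> 1/2 \<le> real (\<Prod>i=1..d-1. Ns i) / (lam d N b * real (\<Prod>i=1..d. N i))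
      \<and> real (\<Prod>i=1..d-1. Ns i) / (lam d N b * real (\<Prod>i=1..d. N i)) \<le> 2 ^ (d^2)
      \<and> (\<forall>x :: nat \<Rightarrow> int. (\<forall>j\<in>{1..d}. 1 \<le> x j \<and> x j \<le> int (N j)) \<longrightarrow>
           (\<forall>i\<in>{1..d-1}. 1 \<le> affmap d M v x i \<and> affmap d M v x i \<le> int (Ns i))))"
proof -
  define n where "n = d - 1"
  have d: "d = Suc n" and n: "n \<ge> 1" and rows: "{1..d-1} = {1..n}"
    using hd by (auto simp: n_def)
  obtain R where ker: "\<forall>z. (\<forall>i\<in>{1..n}. (\<Sum>j=1..d. R i j * z j) = 0) \<longleftrightarrow>
        (\<exists>q::rat. \<forall>j\<in>{1..d}. of_int (z j) = q * of_int (b j))"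
    and nz: "\<forall>i\<in>{1..n}. \<exists>j\<in>{1..d}. R i j \<noteq> 0"
    and bound: "(\<Prod>i=1..n. real_of_int (\<Sum>j=1..d. int (N j) * \<bar>R i j\<bar>))
        \<le> 2 ^ (n * n) * (lam d N b * real (\<Prod>i=1..d. N i))"
    using hN hb unfolding d by (rule exists_orthogonal_rows_lam_bound)
  have X: "0 < lam d N b * real (\<Prod>i=1..d. N i)"
    using lam_prod_pos[OF _ hN hb] hd by simp
  obtain v Ns where Ns_min: "\<forall>i\<in>{1..n}. 0 < Ns i \<and> Min (N ` {1..d}) \<le> Ns i"
    and Ns_lo: "lam d N b * real (\<Prod>i=1..d. N i) / 2 \<le> real (\<Prod>i=1..n. Ns i)"
    and Ns_hi: "real (\<Prod>i=1..n. Ns i) \<le> 2 ^ d\<^sup>2 * (lam d N b * real (\<Prod>i=1..d. N i))"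
    and Ns_box: "\<forall>x. (\<forall>j\<in>{1..d}. 1 \<le> x j \<and> x j \<le> int (N j)) \<longrightarrow>
        (\<forall>i\<in>{1..n}. 1 \<le> affmap d R v x i \<and> affmap d R v x i \<le> int (Ns i))"
    using n hN nz X bound unfolding d by (rule exists_affmap_box_sizes)
  show ?thesis
    unfolding rows
  proof (intro exI[of _ R] exI[of _ v] exI[of _ Ns] conjI)
    show "\<forall>x1 x2. (\<forall>i\<in>{1..n}. affmap d R v x1 i = affmap d R v x2 i) \<longleftrightarrow>
        (\<exists>k :: rat. \<forall>j\<in>{1..d}. of_int (x1 j - x2 j) = k * of_int (b j))"
      unfolding affmap_eq_iff using ker by simp
    show "1/2 \<le> real (\<Prod>i=1..n. Ns i) / (lam d N b * real (\<Prod>i=1..d. N i))"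
      using Ns_lo X by (simp add: field_simps)
    show "real (\<Prod>i=1..n. Ns i) / (lam d N b * real (\<Prod>i=1..d. N i)) \<le> 2 ^ d\<^sup>2"
      using Ns_hi X by (simp add: field_simps)
  qed (fact Ns_min Ns_box)+
qed

end
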